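(* Let $|\cdot|$ be a norm on $\mathbb{R}^d$ and let $\mathbf{X}=\{\mathbf{X}_j,j\in\mathbb{Z}\}$ be a strictly stationary, regularly varying $\mathbb{R}^d$-valued time series with tail process $\mathbf{Y}$. Let $u_n>0$ and positive integers $r_n$ satisfy $u_n\to\infty$, $r_n\to\infty$, $nw_n\to\infty$, $r_n/n\to0$, $r_nw_n\to0$, where $w_n=\mathbb{P}(|\mathbf{X}_0|>u_n)$. Assume condition $\mathcal{S}^{(0)}(r_n,u_n)$ holds. Let $\gamma_1,\gamma_2\ge0$ and let $f:\mathbb{R}_+^2\to\mathbb{R}_+$ be $(\gamma_1,\gamma_2)$-homogeneous, i.e. $f(as,bt)=a^{\gamma_1}b^{\gamma_2}f(s,t)$ for all $a,b,s,t>0$. Then $$\lim_{n\to\infty}\frac{1}{r_n^{\gamma_1+\gamma_2+1}w_n}\mathbb{E}[f(t(1),t(N_1))\mathbf{1}_{A_1}]=\frac{f(1,1)}{\gamma_1+\gamma_2+1}\vartheta.$$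
   Context: Tail process: for all $i\le j$ the law of $x^{-1}(\mathbf{X}_i,\dots,\mathbf{X}_j)$ given $|\mathbf{X}_0|>x$ converges weakly to that of $(\mathbf{Y}_i,\dots,\mathbf{Y}_j)$ as $x\to\infty$. Notation: $\mathbf{x}^*_{i,j}=\sup_{i\le l\le j}|\mathbf{x}_l|$. Condition $\mathcal{S}^{(\gamma)}(r_n,u_n)$ ($\gamma\ge0$): for all $s,t>0$, $\lim_{\ell\to\infty}\limsup_{n\to\infty}\frac{1}{w_n}\sum_{i=\ell}^{r_n}i^\gamma\,\mathbb{P}(|\mathbf{X}_0|>u_ns,|\mathbf{X}_i|>u_nt)=0$. $\vartheta=\mathbb{P}(\mathbf{Y}^*_{-\infty,-1}\le1)$. $A_1=\{\mathbf{X}^*_{1,r_n}>u_n\}$; on $A_1$, $t(1)$ and $t(N_1)$ are the smallest and largest $i\in\{1,\dots,r_n\}$ with $|\mathbf{X}_i|>u_n$. *)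

theory Defs
  imports "HOL-Probability.Probability"
begin

definition is_norm :: "('x::real_vector \<Rightarrow> real) \<Rightarrow> bool" where
  "is_norm N \<longleftrightarrow> (\<forall>x. N x \<ge> 0) \<and> (\<forall>x. N x = 0 \<longleftrightarrow> x = 0) \<and>
     (\<forall>c x. N (c *\<^sub>R x) = \<bar>c\<bar> * N x) \<and> (\<forall>x y. N (x + y) \<le> N x + N y)"

definition strictly_stationary :: "'w measure \<Rightarrow> (int \<Rightarrow> 'w \<Rightarrow> 'x::topological_space) \<Rightarrow> bool" where
  "strictly_stationary M X \<longleftrightarrow>
     distr M (PiM UNIV (\<lambda>_::int. borel)) (\<lambda>\<omega> k. X (k + 1) \<omega>) =
     distr M (PiM UNIV (\<lambda>_::int. borel)) (\<lambda>\<omega> k. X k \<omega>)"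

definition rv_marginal :: "'w measure \<Rightarrow> (int \<Rightarrow> 'w \<Rightarrow> 'x) \<Rightarrow> ('x \<Rightarrow> real) \<Rightarrow> bool" where
  "rv_marginal M X N \<longleftrightarrow> (\<exists>\<alpha>>0.
     (\<forall>\<^sub>F x in at_top. measure M {\<omega>\<in>space M. N (X 0 \<omega>) > x} > 0) \<and>
     (\<forall>t>0. ((\<lambda>x. measure M {\<omega>\<in>space M. N (X 0 \<omega>) > t * x} /
                   measure M {\<omega>\<in>space M. N (X 0 \<omega>) > x}) \<longlongrightarrow> t powr (-\<alpha>)) at_top))"

(* Y (on the probability space MY) is the tail process of X: for all i \<le> j the law of
   x^{-1}(X_i,...,X_j) given N(X_0) > x converges weakly to the law of (Y_i,...,Y_j),
   i.e. E[g(x^{-1} X) | N(X_0) > x] \<rightarrow> E[g(Y)] for every bounded continuous g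
   depending only on the coordinates i..j. *)
definition tail_process ::
  "'w measure \<Rightarrow> (int \<Rightarrow> 'w \<Rightarrow> 'x::real_normed_vector) \<Rightarrow> ('x \<Rightarrow> real) \<Rightarrow>
   'v measure \<Rightarrow> (int \<Rightarrow> 'v \<Rightarrow> 'x) \<Rightarrow> bool" where
  "tail_process M X N MY Y \<longleftrightarrow>
    (\<forall>(i::int) j (g :: (int \<Rightarrow> 'x) \<Rightarrow> real). i \<le> j \<longrightarrow> bounded (range g) \<longrightarrow> continuous_on UNIV g \<longrightarrow>
       g \<in> borel_measurable (PiM UNIV (\<lambda>_. borel)) \<longrightarrow>
       (\<forall>z. g z = g (\<lambda>k. if k \<in> {i..j} then z k else 0)) \<longrightarrow>
       ((\<lambda>x. (\<integral>\<omega>. g (\<lambda>k. X k \<omega> /\<^sub>R x) * indicator {\<omega>\<in>space M. N (X 0 \<omega>) > x} \<omega> \<partial>M)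
               / measure M {\<omega>\<in>space M. N (X 0 \<omega>) > x})
         \<longlongrightarrow> (\<integral>v. g (\<lambda>k. Y k v) \<partial>MY)) at_top)"

definition wn :: "'w measure \<Rightarrow> (int \<Rightarrow> 'w \<Rightarrow> 'x) \<Rightarrow> ('x \<Rightarrow> real) \<Rightarrow> (nat \<Rightarrow> real) \<Rightarrow> nat \<Rightarrow> real" where
  "wn M X N u n = measure M {\<omega>\<in>space M. N (X 0 \<omega>) > u n}"

(* Condition S^(gamma)(r_n,u_n). (The factor i^gamma is written i powr gamma; it only
   differs from the intended value at i = 0, which is irrelevant for l \<rightarrow> \<infinity>.) *)
definition cond_S :: "real \<Rightarrow> 'w measure \<Rightarrow> (int \<Rightarrow> 'w \<Rightarrow> 'x) \<Rightarrow> ('x \<Rightarrow> real) \<Rightarrow>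
    (nat \<Rightarrow> nat) \<Rightarrow> (nat \<Rightarrow> real) \<Rightarrow> bool" where
  "cond_S \<gamma> M X N r u \<longleftrightarrow> (\<forall>s>0. \<forall>t>0.
     ((\<lambda>l. limsup (\<lambda>n. ereal (1 / wn M X N u n *
         (\<Sum>i=l..r n. real i powr \<gamma> *
            measure M {\<omega>\<in>space M. N (X 0 \<omega>) > u n * s \<and> N (X (int i) \<omega>) > u n * t}))))
      \<longlongrightarrow> 0) sequentially)"

definition theta :: "'v measure \<Rightarrow> (int \<Rightarrow> 'v \<Rightarrow> 'x) \<Rightarrow> ('x \<Rightarrow> real) \<Rightarrow> real" where
  "theta MY Y N = measure MY {v\<in>space MY. \<forall>k<0. N (Y k v) \<le> 1}"

definition exc_times :: "(int \<Rightarrow> 'w \<Rightarrow> 'x) \<Rightarrow> ('x \<Rightarrow> real) \<Rightarrow> nat \<Rightarrow> real \<Rightarrow> 'w \<Rightarrow> nat set" where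
  "exc_times X N r x \<omega> = {i\<in>{1..r}. N (X (int i) \<omega>) > x}"

definition A1 :: "'w measure \<Rightarrow> (int \<Rightarrow> 'w \<Rightarrow> 'x) \<Rightarrow> ('x \<Rightarrow> real) \<Rightarrow> nat \<Rightarrow> real \<Rightarrow> 'w set" where
  "A1 M X N r x = {\<omega>\<in>space M. exc_times X N r x \<omega> \<noteq> {}}"

(* t(1) and t(N_1): first and last exceedance times (meaningful on A_1) *)
definition t_first :: "(int \<Rightarrow> 'w \<Rightarrow> 'x) \<Rightarrow> ('x \<Rightarrow> real) \<Rightarrow> nat \<Rightarrow> real \<Rightarrow> 'w \<Rightarrow> nat" where
  "t_first X N r x \<omega> = Min (exc_times X N r x \<omega>)"

definition t_last :: "(int \<Rightarrow> 'w \<Rightarrow> 'x) \<Rightarrow> ('x \<Rightarrow> real) \<Rightarrow> nat \<Rightarrow> real \<Rightarrow> 'w \<Rightarrow> nat" where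
  "t_last X N r x \<omega> = Max (exc_times X N r x \<omega>)"

end

(*
  Cut the block {1..r} at its first exceedance t(1) = i.  By stationarity, {t(1) = i} has
  nearly the probability of the window event {|X_0| > u, max_{-l <= k < 0} |X_k| <= u}, the
  error being controlled through condition S^(0) by pairs of exceedances at distance >= l;
  for the same reason t(N_1) - t(1) < l with high probability, so homogeneity makes
  f(t(1), t(N_1)) close to f(1,1) i^(gamma1 + gamma2).  Summing over i <= r gives the factor
  r^(gamma1 + gamma2 + 1) / (gamma1 + gamma2 + 1).  The window probability divided by
  P(|X_0| > u) tends to P(max_{-l <= k < 0} |Y_k| <= 1), which tends to theta as l grows.
  That first limit needs P(|Y_k| = 1) = 0, which follows from the regular variation of |X_0|
  by comparing |Y_k| with its rescalings.
*)
theory Submission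
  imports Defs
begin

lemma powr_diff_mvt_bounds:
  fixes a b p :: real
  assumes "0 < a" "a \<le> b" "p \<ge> 1"
  shows "p * a powr (p - 1) * (b - a) \<le> b powr p - a powr p"
    and "b powr p - a powr p \<le> p * b powr (p - 1) * (b - a)"
proof -
  have "\<exists>z\<ge>a. z \<le> b \<and> b powr p - a powr p = (b - a) * (p * z powr (p - 1))"
  proof (cases "a = b")
    case False
    then have "\<exists>z>a. z < b \<and> b powr p - a powr p = (b - a) * (p * z powr (p - 1))"
      using assms by (intro MVT2) (auto intro!: has_real_derivative_powr)
    then show ?thesis by (meson less_imp_le)
  qed auto
  then obtain z where z: "a \<le> z" "z \<le> b" "b powr p - a powr p = (b - a) * (p * z powr (p - 1))"
    by blast
  have "a powr (p - 1) \<le> z powr (p - 1)" "z powr (p - 1) \<le> b powr (p - 1)"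
    using z assms by (auto intro!: powr_mono2)
  then have "p * a powr (p - 1) * (b - a) \<le> p * z powr (p - 1) * (b - a)"
    and "p * z powr (p - 1) * (b - a) \<le> p * b powr (p - 1) * (b - a)"
    using assms by (auto intro!: mult_left_mono mult_right_mono)
  then show "p * a powr (p - 1) * (b - a) \<le> b powr p - a powr p"
    and "b powr p - a powr p \<le> p * b powr (p - 1) * (b - a)"
    unfolding z(3) by (simp_all add: ac_simps)
qed

lemma sum_powr_lower_bound:
  fixes g :: real assumes "g \<ge> 0"
  shows "real n powr (g + 1) / (g + 1) \<le> (\<Sum>i=1..n. real i powr g)"
proof (induction n)
  case (Suc n)
  have "real (Suc n) powr (g + 1) - real n powr (g + 1) \<le> (g + 1) * real (Suc n) powr g"
    using powr_diff_mvt_bounds(2)[of "real n" "real (Suc n)" "g + 1"] assms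
    by (cases "n = 0") simp_all
  then have "real (Suc n) powr (g + 1) / (g + 1) - real n powr (g + 1) / (g + 1) \<le> real (Suc n) powr g"
    using assms by (simp add: pos_divide_le_eq mult.commute flip: diff_divide_distrib)
  with Suc show ?case by simp
qed simp

lemma sum_powr_upper_bound:
  fixes g :: real assumes "g \<ge> 0"
  shows "(\<Sum>i=1..n. real i powr g) \<le> real (n + 1) powr (g + 1) / (g + 1)"
proof (induction n)
  case (Suc n)
  have "(g + 1) * real (Suc n) powr g \<le> real (Suc n + 1) powr (g + 1) - real (Suc n) powr (g + 1)"
    using powr_diff_mvt_bounds(1)[of "real (Suc n)" "real (Suc n + 1)" "g + 1"] assms by simp
  then have "real (Suc n) powr g \<le> real (Suc n + 1) powr (g + 1) / (g + 1) - real (n + 1) powr (g + 1) / (g + 1)"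
    using assms by (simp add: pos_le_divide_eq mult.commute flip: diff_divide_distrib)
  with Suc show ?case by simp
qed (use assms in simp)

lemma sum_powr_le_powr_Suc:
  fixes g :: real assumes "g \<ge> 0"
  shows "(\<Sum>i=1..n. real i powr g) \<le> real n powr (g + 1)"
proof -
  have "(\<Sum>i=1..n. real i powr g) \<le> (\<Sum>i=1..n. real n powr g)"
    using assms by (intro sum_mono powr_mono2) auto
  also have "\<dots> = real n powr (g + 1)"
    by (cases "n = 0") (simp_all add: powr_add)
  finally show ?thesis .
qed

lemma sum_shifted_powr_upper_bound:
  fixes g :: real assumes "g \<ge> 0"
  shows "(\<Sum>i=1..n. real (i + l) powr g) \<le> real (n + l + 1) powr (g + 1) / (g + 1)"
proof -
  have "(\<Sum>i=1..n. real (i + l) powr g) = (\<Sum>j=1+l..n+l. real j powr g)"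
    using sum.shift_bounds_cl_nat_ivl[of "\<lambda>j. real j powr g" 1 l n] by simp
  also have "\<dots> \<le> (\<Sum>j=1..n+l. real j powr g)"
    by (intro sum_mono2) auto
  also have "\<dots> \<le> real (n + l + 1) powr (g + 1) / (g + 1)"
    by (rule sum_powr_upper_bound[OF assms])
  finally show ?thesis .
qed

lemma prod_diff_le_sum_diff:
  fixes a b :: "'i \<Rightarrow> real"
  assumes "finite K" "\<And>k. k \<in> K \<Longrightarrow> 0 \<le> b k \<and> b k \<le> a k \<and> a k \<le> 1"
  shows "(\<Prod>k\<in>K. a k) - (\<Prod>k\<in>K. b k) \<le> (\<Sum>k\<in>K. a k - b k)"
  using assms
proof (induction K rule: finite_induct)
  case (insert k F)
  have IH: "(\<Prod>k\<in>F. a k) - (\<Prod>k\<in>F. b k) \<le> (\<Sum>k\<in>F. a k - b k)"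
    using insert by auto
  have ab: "0 \<le> b k" "b k \<le> a k" "a k \<le> 1"
    using insert by auto
  have pb: "0 \<le> (\<Prod>k\<in>F. b k)" "(\<Prod>k\<in>F. b k) \<le> 1" "(\<Prod>k\<in>F. b k) \<le> (\<Prod>k\<in>F. a k)"
    using insert.prems by (force intro!: prod_nonneg prod_le_1 prod_mono)+
  have "(\<Prod>k\<in>insert k F. a k) - (\<Prod>k\<in>insert k F. b k) =
        a k * ((\<Prod>k\<in>F. a k) - (\<Prod>k\<in>F. b k)) + (a k - b k) * (\<Prod>k\<in>F. b k)"
    using insert by (simp add: algebra_simps)
  also have "\<dots> \<le> 1 * ((\<Prod>k\<in>F. a k) - (\<Prod>k\<in>F. b k)) + (a k - b k) * 1"
    using ab pb by (intro add_mono mult_mono) auto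
  also have "\<dots> \<le> (\<Sum>k\<in>insert k F. a k - b k)"
    using IH insert by simp
  finally show ?case .
qed simp

lemma is_norm_continuous:
  fixes N :: "'a::euclidean_space \<Rightarrow> real"
  assumes "is_norm N" shows "continuous_on UNIV N"
proof (rule convex_on_continuous)
  show "convex_on UNIV N"
  proof (rule convex_onI)
    fix t :: real and x y :: 'a
    assume "t > 0" "t < 1"
    then show "N ((1 - t) *\<^sub>R x + t *\<^sub>R y) \<le> (1 - t) * N x + t * N y"
      using assms unfolding is_norm_def by (metis abs_of_pos diff_gt_0_iff_gt)
  qed simp
qed simp

lemma powr_mult_powr_between:
  fixes a b c \<gamma>1 \<gamma>2 :: real
  assumes "1 \<le> a" "a \<le> b" "b \<le> c" "\<gamma>1 \<ge> 0" "\<gamma>2 \<ge> 0"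
  shows "a powr (\<gamma>1 + \<gamma>2) \<le> a powr \<gamma>1 * b powr \<gamma>2"
    and "a powr \<gamma>1 * b powr \<gamma>2 \<le> c powr (\<gamma>1 + \<gamma>2)"
proof -
  have "a powr \<gamma>2 \<le> b powr \<gamma>2" "a powr \<gamma>1 \<le> c powr \<gamma>1" "b powr \<gamma>2 \<le> c powr \<gamma>2"
    using assms by (auto intro!: powr_mono2)
  then show "a powr (\<gamma>1 + \<gamma>2) \<le> a powr \<gamma>1 * b powr \<gamma>2"
    and "a powr \<gamma>1 * b powr \<gamma>2 \<le> c powr (\<gamma>1 + \<gamma>2)"
    using assms by (auto simp: powr_add intro!: mult_mono)
qed

lemma (in finite_measure) integral_sum_indicator:
  assumes "\<And>i. i \<in> I \<Longrightarrow> A i \<in> sets M"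
  shows "(\<integral>\<omega>. (\<Sum>i\<in>I. a i * indicator (A i) \<omega>) \<partial>M) = (\<Sum>i\<in>I. a i * measure M (A i))"
proof -
  have "(\<integral>\<omega>. (\<Sum>i\<in>I. a i * indicator (A i) \<omega>) \<partial>M) = (\<Sum>i\<in>I. (\<integral>\<omega>. a i * indicator (A i) \<omega> \<partial>M))"
    using assms by (intro Bochner_Integration.integral_sum integrable_mult_right integrable_real_indicator)
      (auto simp: less_top[symmetric])
  also have "\<dots> = (\<Sum>i\<in>I. a i * measure M (A i))"
    using assms sets.Int_space_eq2 by (intro sum.cong refl) simp
  finally show ?thesis .
qed

lemma powr_shift_ratio_tendsto:
  assumes r: "filterlim r at_top sequentially"
  shows "(\<lambda>n. real (r n + m) powr p / real (r n) powr p) \<longlonglongrightarrow> 1"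
proof -
  have r_real: "filterlim (\<lambda>n. real (r n)) at_top sequentially"
    using filterlim_compose[OF filterlim_real_sequentially r] by (simp add: o_def)
  then have "(\<lambda>n. real m / real (r n)) \<longlonglongrightarrow> 0"
    by (intro tendsto_divide_0[OF tendsto_const] filterlim_at_top_imp_at_infinity)
  then have "(\<lambda>n. (1 + real m / real (r n)) powr p) \<longlonglongrightarrow> (1 + 0) powr p"
    by (intro tendsto_powr tendsto_add tendsto_const) auto
  moreover have "\<forall>\<^sub>F n in sequentially. (1 + real m / real (r n)) powr p = real (r n + m) powr p / real (r n) powr p"
    using filterlim_iff[THEN iffD1, OF r, rule_format, OF eventually_gt_at_top[of 0]]
    by eventually_elim (simp add: field_simps flip: powr_divide)
  ultimately show ?thesis
    by (simp add: tendsto_cong)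
qed

lemma const_div_powr_tendsto_0:
  assumes r: "filterlim r at_top sequentially" and p: "p > 0"
  shows "(\<lambda>n. K / real (r n) powr p) \<longlonglongrightarrow> 0"
proof -
  have "filterlim (\<lambda>n. real (r n)) at_top sequentially"
    using filterlim_compose[OF filterlim_real_sequentially r] by (simp add: o_def)
  then have "(\<lambda>n. K * real (r n) powr - p) \<longlonglongrightarrow> K * 0"
    using p by (intro tendsto_mult tendsto_const tendsto_neg_powr) auto
  then show ?thesis
    by (simp add: powr_minus divide_inverse)
qed

text \<open>
  Error bookkeeping for the final sandwich: \<open>T\<close> lies between the lower and upper estimates, whose
  ingredients \<open>p\<close>, \<open>s\<close>, \<open>B\<close>, \<open>A\<close> are within \<open>d\<close> of their limits \<open>th\<close>, \<open>0\<close>, \<open>0\<close>, \<open>1\<close>.\<close>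

lemma sandwich_error_bound:
  fixes c g th p s A B T d :: real
  assumes c: "c \<ge> 0" and g: "g \<ge> 0" and th: "0 \<le> th" "th \<le> 1" and d: "0 < d" "d \<le> 1/2"
    and p: "0 \<le> p" "th - d \<le> p" "p \<le> th + 2 * d" and s: "0 \<le> s" "s \<le> d"
    and B: "B \<le> d" and A: "A \<le> 1 + d"
    and lower: "c * p / (g + 1) - c * s \<le> T" and upper: "T \<le> c * p * A / (g + 1) + B + c * s"
  shows "\<bar>T - c / (g + 1) * th\<bar> \<le> (6 * c + 1) * d"
proof -
  define k where "k = 1 / (g + 1)"
  have k: "0 < k" "k \<le> 1"
    using g by (auto simp: k_def field_simps)
  have ck: "0 \<le> c * k" "c * k * d \<le> c * d" "c * s \<le> c * d"
    using c k d s by (auto intro: mult_right_mono mult_left_mono simp: mult_left_le)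
  have lower': "c * k * p - c * s \<le> T" and upper': "T \<le> c * k * (p * A) + B + c * s"
    using lower upper by (simp_all add: k_def ac_simps)
  have "c * k * (th - d) \<le> c * k * p"
    using p ck by (intro mult_left_mono) auto
  then have L: "c * k * th - 2 * (c * d) \<le> T"
    using lower' ck by (simp add: algebra_simps)
  have "p * A \<le> p * (1 + d)"
    using p A by (intro mult_left_mono) auto
  also have "\<dots> \<le> (th + 2 * d) * (1 + d)"
    using p d by (intro mult_right_mono) auto
  also have "\<dots> = th + th * d + 2 * d + 2 * (d * d)"
    by (simp add: algebra_simps)
  also have "\<dots> \<le> th + 4 * d"
  proof -
    have "th * d \<le> 1 * d" "d * d \<le> d * (1 / 2)"
      using th d by (intro mult_right_mono mult_left_mono; simp)+
    then show ?thesis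
      by simp
  qed
  finally have "c * k * (p * A) \<le> c * k * (th + 4 * d)"
    using ck by (intro mult_left_mono) auto
  then have U: "T \<le> c * k * th + 5 * (c * d) + d"
    using upper' ck B by (simp add: algebra_simps)
  have "c / (g + 1) * th = c * k * th"
    by (simp add: k_def)
  moreover have "0 \<le> c * d" "(6 * c + 1) * d = 6 * (c * d) + d"
    using c d by (simp_all add: algebra_simps)
  ultimately show ?thesis
    using L U d unfolding abs_le_iff by linarith
qed

section \<open>Continuous cut-offs\<close>

definition hat :: "real \<Rightarrow> real \<Rightarrow> real \<Rightarrow> real" where
  "hat c e t = max 0 (1 - \<bar>t - c\<bar> / e)"

lemma continuous_on_hat: "continuous_on UNIV (hat c e)"
  unfolding hat_def divide_inverse by (intro continuous_intros)

lemma borel_measurable_hat[measurable]: "hat c e \<in> borel_measurable borel"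
  using continuous_on_hat by (rule borel_measurable_continuous_onI)

lemma hat_bounds: "0 \<le> hat c e t" "e > 0 \<Longrightarrow> hat c e t \<le> 1"
  unfolding hat_def by auto

lemma hat_pos_imp_near:
  assumes "hat c e t > 0" "e > 0"
  shows "\<bar>t - c\<bar> < e"
  using assms unfolding hat_def by (auto simp: less_max_iff_disj field_simps)

text \<open>Hats of half-width \<open>1/(2K)\<close> centred on the grid \<open>1 + i/K\<close> have disjoint supports.\<close>

lemma sum_hat_grid_le_1:
  assumes K: "K > (0::nat)"
  shows "(\<Sum>i<K. hat (1 + real i / K) (1 / (2 * real K)) t) \<le> 1"
proof (cases "\<exists>i<K. hat (1 + real i / K) (1 / (2 * real K)) t > 0")
  case False
  have "hat (1 + real i / K) (1 / (2 * real K)) t = 0" if "i < K" for i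
    using False that hat_bounds(1)[of "1 + real i / K" "1 / (2 * real K)" t] by force
  then have "(\<Sum>i<K. hat (1 + real i / K) (1 / (2 * real K)) t) = 0"
    by (intro sum.neutral) simp
  then show ?thesis by simp
next
  case True
  define e where "e = 1 / (2 * real K)"
  have e: "e > 0" using K by (simp add: e_def)
  from True obtain i where i: "i < K" "hat (1 + real i / K) e t > 0"
    unfolding e_def by blast
  have vanish: "hat (1 + real j / K) e t = 0" if "j \<in> {..<K} - {i}" for j
  proof (rule ccontr)
    assume "hat (1 + real j / K) e t \<noteq> 0"
    then have "hat (1 + real j / K) e t > 0"
      using hat_bounds(1) by (simp add: less_le)
    then have "\<bar>t - (1 + real j / K)\<bar> < e" "\<bar>t - (1 + real i / K)\<bar> < e"
      using hat_pos_imp_near[OF _ e] i(2) by blast+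
    then have "\<bar>real i / K - real j / K\<bar> < 2 * e"
      unfolding abs_less_iff by linarith
    then have "\<bar>real i / K - real j / K\<bar> < 1 / K"
      using K by (simp add: e_def)
    then have "\<bar>real i - real j\<bar> < 1"
      using K by (simp add: diff_divide_distrib[symmetric] abs_divide divide_less_cancel)
    then show False using that by auto
  qed
  have "(\<Sum>j<K. hat (1 + real j / K) e t) = hat (1 + real i / K) e t"
    using i(1) vanish by (subst sum.remove[of _ i]) auto
  also have "\<dots> \<le> 1" using hat_bounds(2)[OF e] .
  finally show ?thesis unfolding e_def .
qed

text \<open>Continuous upper and lower approximations of the indicator of \<open>t \<le> 1\<close>.\<close>

definition ramp_upper :: "real \<Rightarrow> real \<Rightarrow> real" where
  "ramp_upper e t = min 1 (max 0 ((1 + e - t) / e))"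

definition ramp_lower :: "real \<Rightarrow> real \<Rightarrow> real" where
  "ramp_lower e t = min 1 (max 0 ((1 - t) / e))"

lemma continuous_on_ramp_upper: "continuous_on UNIV (ramp_upper e)"
  unfolding ramp_upper_def divide_inverse by (intro continuous_intros)

lemma continuous_on_ramp_lower: "continuous_on UNIV (ramp_lower e)"
  unfolding ramp_lower_def divide_inverse by (intro continuous_intros)

lemma borel_measurable_ramp_upper[measurable]: "ramp_upper e \<in> borel_measurable borel"
  using continuous_on_ramp_upper by (rule borel_measurable_continuous_onI)

lemma borel_measurable_ramp_lower[measurable]: "ramp_lower e \<in> borel_measurable borel"
  using continuous_on_ramp_lower by (rule borel_measurable_continuous_onI)

lemma ramp_upper_bounds: "0 \<le> ramp_upper e t" "ramp_upper e t \<le> 1"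
  unfolding ramp_upper_def by auto

lemma ramp_lower_bounds: "0 \<le> ramp_lower e t" "ramp_lower e t \<le> 1"
  unfolding ramp_lower_def by auto

lemma ramp_upper_eq_1: "e > 0 \<Longrightarrow> t \<le> 1 \<Longrightarrow> ramp_upper e t = 1"
  unfolding ramp_upper_def by (auto simp: field_simps)

lemma ramp_lower_eq_0: "e > 0 \<Longrightarrow> t > 1 \<Longrightarrow> ramp_lower e t = 0"
  unfolding ramp_lower_def by (auto simp: field_simps)

lemma ramp_lower_le_upper: "e > 0 \<Longrightarrow> ramp_lower e t \<le> ramp_upper e t"
  unfolding ramp_lower_def ramp_upper_def
  by (intro min.mono max.mono divide_right_mono order_refl) auto

lemma ramp_gap_le_hat:
  assumes e: "e > 0"
  shows "ramp_upper e t - ramp_lower e t \<le> 2 * hat 1 (2 * e) t"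
proof -
  consider "t \<le> 1 - e" | "t \<ge> 1 + e" | "\<bar>t - 1\<bar> \<le> e" by linarith
  then show ?thesis
  proof cases
    case 3
    then have "hat 1 (2 * e) t \<ge> 1 / 2"
      using e unfolding hat_def by (simp add: field_simps)
    then show ?thesis
      using ramp_upper_bounds[of e t] ramp_lower_bounds[of e t] by simp
  qed (use e hat_bounds(1)[of 1 "2 * e" t] in \<open>auto simp: ramp_upper_def ramp_lower_def field_simps\<close>)
qed

lemma prod_ramp_lower_le_indicator:
  assumes "finite W" "e > 0"
  shows "(\<Prod>k\<in>W. ramp_lower e (z k)) \<le> of_bool (\<forall>k\<in>W. z k \<le> 1)"
proof (cases "\<forall>k\<in>W. z k \<le> 1")
  case False
  then obtain k where "k \<in> W" "z k > 1" by auto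
  then have "(\<Prod>k\<in>W. ramp_lower e (z k)) = 0"
    using assms ramp_lower_eq_0 by (intro prod_zero) auto
  then show ?thesis by simp
qed (simp add: ramp_lower_bounds prod_le_1)

lemma indicator_le_prod_ramp_upper:
  assumes "e > 0"
  shows "of_bool (\<forall>k\<in>W. z k \<le> 1) \<le> (\<Prod>k\<in>W. ramp_upper e (z k))"
  using assms by (auto simp: ramp_upper_eq_1 ramp_upper_bounds prod_nonneg)

section \<open>Tail process, windows and their limits\<close>

locale regvar_tail =
  fixes M :: "'w measure" and X :: "int \<Rightarrow> 'w \<Rightarrow> 'x::euclidean_space"
    and MY :: "'v measure" and Y :: "int \<Rightarrow> 'v \<Rightarrow> 'x"
    and N :: "'x \<Rightarrow> real" and \<alpha> :: real
  assumes norm: "is_norm N"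
    and prob_M: "prob_space M" and prob_MY: "prob_space MY"
    and measurable_X: "\<And>k. X k \<in> borel_measurable M"
    and measurable_Y: "\<And>k. Y k \<in> borel_measurable MY"
    and alpha_pos: "\<alpha> > 0"
    and tail_ratio: "\<And>t. t > 0 \<Longrightarrow> ((\<lambda>x. measure M {\<omega>\<in>space M. N (X 0 \<omega>) > t * x} /
                   measure M {\<omega>\<in>space M. N (X 0 \<omega>) > x}) \<longlongrightarrow> t powr (-\<alpha>)) at_top"
    and exceed_pos: "\<forall>\<^sub>F x in at_top. measure M {\<omega>\<in>space M. N (X 0 \<omega>) > x} > 0"
    and tail: "tail_process M X N MY Y"
    and stationary: "strictly_stationary M X"
begin

sublocale PM: prob_space M by (rule prob_M)
sublocale PY: prob_space MY by (rule prob_MY)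

lemma N_measurable[measurable]: "N \<in> borel_measurable borel"
  using is_norm_continuous[OF norm] by (rule borel_measurable_continuous_onI)

declare measurable_X[measurable] measurable_Y[measurable]

lemma N_scaleR_inverse: "v > 0 \<Longrightarrow> N (x /\<^sub>R v) = N x / v"
  using norm unfolding is_norm_def by (simp add: divide_inverse mult.commute)

lemma integrable_unit_bounded_M:
  fixes h :: "'w \<Rightarrow> real"
  assumes "h \<in> borel_measurable M" "\<And>\<omega>. \<omega> \<in> space M \<Longrightarrow> \<bar>h \<omega>\<bar> \<le> 1"
  shows "integrable M h"
  using assms by (intro PM.integrable_const_bound[where B=1]) auto

lemma integrable_unit_bounded_MY:
  fixes h :: "'v \<Rightarrow> real"
  assumes "h \<in> borel_measurable MY" "\<And>y. y \<in> space MY \<Longrightarrow> \<bar>h y\<bar> \<le> 1"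
  shows "integrable MY h"
  using assms by (intro PY.integrable_const_bound[where B=1]) auto

definition exceed :: "real \<Rightarrow> 'w set" where
  "exceed v = {\<omega>\<in>space M. N (X 0 \<omega>) > v}"

lemma exceed_sets[measurable]: "exceed v \<in> sets M"
  unfolding exceed_def by measurable

lemma tail_limit_prod:
  fixes \<phi> :: "real \<Rightarrow> real"
  assumes \<phi>: "continuous_on UNIV \<phi>" "\<And>t. 0 \<le> \<phi> t \<and> \<phi> t \<le> 1"
    and K: "K \<subseteq> {i..j}" "i \<le> j"
  shows "((\<lambda>v. (\<integral>\<omega>. (\<Prod>k\<in>K. \<phi> (N (X k \<omega> /\<^sub>R v))) * indicator (exceed v) \<omega> \<partial>M)
               / measure M (exceed v))
         \<longlongrightarrow> (\<integral>y. (\<Prod>k\<in>K. \<phi> (N (Y k y))) \<partial>MY)) at_top"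
proof -
  define g where "g z = (\<Prod>k\<in>K. \<phi> (N (z k)))" for z :: "int \<Rightarrow> 'x"
  have [measurable]: "\<phi> \<in> borel_measurable borel"
    using \<phi>(1) by (rule borel_measurable_continuous_onI)
  have "range g \<subseteq> {0..1}"
    unfolding g_def using \<phi>(2) by (auto intro!: prod_nonneg prod_le_1)
  then have bounded: "bounded (range g)"
    using bounded_subset[OF bounded_closed_interval] by blast
  have "continuous_on UNIV (\<lambda>z::int \<Rightarrow> 'x. \<phi> (N (z k)))" for k
    by (rule continuous_on_compose2[OF \<phi>(1) continuous_on_compose2[OF is_norm_continuous[OF norm]
          continuous_on_product_coordinates]]) auto
  then have continuous: "continuous_on UNIV g"
    unfolding g_def by (rule continuous_on_prod)
  have measurable: "g \<in> borel_measurable (PiM UNIV (\<lambda>_. borel))"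
    unfolding g_def by measurable
  have local: "\<And>z. g z = g (\<lambda>k. if k \<in> {i..j} then z k else 0)"
    unfolding g_def using K by (auto intro!: prod.cong)
  show ?thesis
    using tail[unfolded tail_process_def, rule_format, OF K(2) bounded continuous measurable local]
    unfolding g_def exceed_def .
qed

lemma integral_exceed_rescaled_le:
  fixes \<phi> :: "real \<Rightarrow> real"
  assumes \<phi>: "\<phi> \<in> borel_measurable borel" "\<And>t. 0 \<le> \<phi> t \<and> \<phi> t \<le> 1" and x: "x \<ge> 1" and v: "v > 0"
  shows "(\<integral>\<omega>. \<phi> (x * N (X j \<omega> /\<^sub>R (x * v))) * indicator (exceed (x * v)) \<omega> \<partial>M)
           \<le> (\<integral>\<omega>. \<phi> (N (X j \<omega> /\<^sub>R v)) * indicator (exceed v) \<omega> \<partial>M)"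
proof -
  have integrable: "integrable M (\<lambda>\<omega>. \<phi> (N (X j \<omega> /\<^sub>R v)) * indicator (exceed w) \<omega>)" for w
    using \<phi> by (intro integrable_unit_bounded_M) (auto simp: indicator_def)
  have "x * N (X j \<omega> /\<^sub>R (x * v)) = N (X j \<omega> /\<^sub>R v)" for \<omega>
    using x v N_scaleR_inverse[of "x * v"] N_scaleR_inverse[of v] by simp
  then have "(\<integral>\<omega>. \<phi> (x * N (X j \<omega> /\<^sub>R (x * v))) * indicator (exceed (x * v)) \<omega> \<partial>M)
      = (\<integral>\<omega>. \<phi> (N (X j \<omega> /\<^sub>R v)) * indicator (exceed (x * v)) \<omega> \<partial>M)"
    by simp
  also have "\<dots> \<le> (\<integral>\<omega>. \<phi> (N (X j \<omega> /\<^sub>R v)) * indicator (exceed v) \<omega> \<partial>M)"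
  proof (rule integral_mono[OF integrable integrable])
    have "v \<le> x * v"
      using x v by simp
    then have "exceed (x * v) \<subseteq> exceed v"
      unfolding exceed_def by auto
    then show "\<phi> (N (X j \<omega> /\<^sub>R v)) * indicator (exceed (x * v)) \<omega>
        \<le> \<phi> (N (X j \<omega> /\<^sub>R v)) * indicator (exceed v) \<omega>" for \<omega>
      using \<phi>(2) by (auto simp: indicator_def)
  qed
  finally show ?thesis .
qed

text \<open>Regular variation of \<open>N (X 0)\<close> with index \<open>\<alpha>\<close> transfers to \<open>N (Y j)\<close> as this scaling inequality.\<close>

lemma expectation_scaled_le:
  fixes \<phi> :: "real \<Rightarrow> real"
  assumes \<phi>: "continuous_on UNIV \<phi>" "\<And>t. 0 \<le> \<phi> t \<and> \<phi> t \<le> 1" and x: "x \<ge> 1"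
  shows "x powr (-\<alpha>) * (\<integral>y. \<phi> (x * N (Y j y)) \<partial>MY) \<le> (\<integral>y. \<phi> (N (Y j y)) \<partial>MY)"
proof -
  define I where "I h v = (\<integral>\<omega>. h (N (X j \<omega> /\<^sub>R v)) * indicator (exceed v) \<omega> \<partial>M)"
    for h :: "real \<Rightarrow> real" and v
  define D where "D v = measure M (exceed v)" for v
  define \<psi> where "\<psi> t = \<phi> (x * t)" for t
  have \<psi>: "continuous_on UNIV \<psi>" "\<And>t. 0 \<le> \<psi> t \<and> \<psi> t \<le> 1"
    unfolding \<psi>_def using \<phi> by (auto intro!: continuous_on_compose2[OF \<phi>(1)] continuous_intros)
  have xv: "filterlim (\<lambda>v. x * v) at_top at_top"
    using x by (intro filterlim_tendsto_pos_mult_at_top[OF tendsto_const]) (auto simp: filterlim_ident)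
  have "((\<lambda>v. I \<psi> (x * v) / D (x * v) * (D (x * v) / D v)) \<longlongrightarrow>
      (\<integral>y. \<psi> (N (Y j y)) \<partial>MY) * x powr (-\<alpha>)) at_top"
  proof (rule tendsto_mult)
    show "((\<lambda>v. I \<psi> (x * v) / D (x * v)) \<longlongrightarrow> (\<integral>y. \<psi> (N (Y j y)) \<partial>MY)) at_top"
      using filterlim_compose[OF tail_limit_prod[OF \<psi>, of "{j}" j j] xv]
      by (simp add: I_def D_def)
    show "((\<lambda>v. D (x * v) / D v) \<longlongrightarrow> x powr (-\<alpha>)) at_top"
      using tail_ratio[of x] x by (simp add: D_def exceed_def)
  qed
  moreover have "((\<lambda>v. I \<phi> v / D v) \<longlongrightarrow> (\<integral>y. \<phi> (N (Y j y)) \<partial>MY)) at_top"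
    using tail_limit_prod[OF \<phi>, of "{j}" j j] by (simp add: I_def D_def)
  moreover have "\<forall>\<^sub>F v in at_top. I \<psi> (x * v) / D (x * v) * (D (x * v) / D v) \<le> I \<phi> v / D v"
    using exceed_pos eventually_gt_at_top[of 0]
  proof eventually_elim
    case (elim v)
    have "I \<psi> (x * v) \<le> I \<phi> v"
      unfolding I_def \<psi>_def using \<phi>(1) by (intro integral_exceed_rescaled_le \<phi>(2) x elim(2))
        (rule borel_measurable_continuous_onI)
    moreover have "I \<psi> (x * v) \<ge> 0"
      unfolding I_def using \<psi>(2) by (intro integral_nonneg_AE) (auto simp: indicator_def)
    moreover have "D v > 0"
      using elim by (simp add: D_def exceed_def)
    moreover have "I \<psi> (x * v) / D (x * v) * (D (x * v) / D v) =
        (if D (x * v) = 0 then 0 else I \<psi> (x * v) / D v)"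
      by simp
    ultimately show ?case
      by (simp add: divide_right_mono)
  qed
  ultimately have "(\<integral>y. \<psi> (N (Y j y)) \<partial>MY) * x powr (-\<alpha>) \<le> (\<integral>y. \<phi> (N (Y j y)) \<partial>MY)"
    by (intro tendsto_le[of at_top]) simp_all
  then show ?thesis
    unfolding \<psi>_def by (simp add: mult.commute)
qed

lemma expectation_hat_translated_ge:
  assumes K: "K > (0::nat)" and i: "i < K"
  shows "2 powr (-\<alpha>) * (\<integral>y. hat 1 (1 / (4 * real K)) (N (Y j y)) \<partial>MY)
           \<le> (\<integral>y. hat (1 + real i / K) (1 / (2 * real K)) (N (Y j y)) \<partial>MY)"
proof -
  define e x where "e = 1 / (2 * real K)" and "x = 1 + real i / K"
  have e: "e > 0" and x: "1 \<le> x" "x \<le> 2"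
    using K i by (auto simp: e_def x_def field_simps)
  have hat_e: "0 \<le> hat c e t \<and> hat c e t \<le> 1" for c t
    using hat_bounds(1) hat_bounds(2)[OF e] by blast
  have "(\<integral>y. hat 1 (1 / (4 * real K)) (N (Y j y)) \<partial>MY) \<le> (\<integral>y. hat x e (x * N (Y j y)) \<partial>MY)"
  proof (rule integral_mono)
    show "integrable MY (\<lambda>y. hat 1 (1 / (4 * real K)) (N (Y j y)))"
      using K hat_bounds(1) hat_bounds(2)[of "1 / (4 * real K)"] by (intro integrable_unit_bounded_MY) auto
    show "integrable MY (\<lambda>y. hat x e (x * N (Y j y)))"
      using hat_e by (intro integrable_unit_bounded_MY) auto
    fix y
    have "x * N (Y j y) - x = x * (N (Y j y) - 1)"
      by (simp add: algebra_simps)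
    then have "\<bar>x * N (Y j y) - x\<bar> = x * \<bar>N (Y j y) - 1\<bar>"
      using x by (simp add: abs_mult)
    then have "\<bar>x * N (Y j y) - x\<bar> / e \<le> \<bar>N (Y j y) - 1\<bar> / (1 / (4 * real K))"
      using x e K by (simp add: e_def field_simps mult_right_mono)
    then show "hat 1 (1 / (4 * real K)) (N (Y j y)) \<le> hat x e (x * N (Y j y))"
      unfolding hat_def by linarith
  qed
  moreover have "2 powr (-\<alpha>) \<le> x powr (-\<alpha>)"
    using x alpha_pos by (simp add: powr_minus divide_inverse[symmetric] le_divide_eq powr_mono2)
  ultimately have "2 powr (-\<alpha>) * (\<integral>y. hat 1 (1 / (4 * real K)) (N (Y j y)) \<partial>MY)
      \<le> x powr (-\<alpha>) * (\<integral>y. hat x e (x * N (Y j y)) \<partial>MY)"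
    using hat_bounds(1) by (intro mult_mono integral_nonneg_AE) auto
  also have "\<dots> \<le> (\<integral>y. hat x e (N (Y j y)) \<partial>MY)"
    using expectation_scaled_le[OF continuous_on_hat hat_e x(1)] .
  finally show ?thesis
    unfolding e_def x_def .
qed

text \<open>
  \<open>N (Y j)\<close> has no atom at \<open>1\<close>: the scaling inequality compares the hat at \<open>1\<close> with \<open>K\<close> translated
  hats with disjoint supports, whose expectations add up to at most \<open>1\<close>.\<close>

lemma expectation_hat_le:
  assumes K: "K > (0::nat)"
  shows "(\<integral>y. hat 1 (1 / (4 * real K)) (N (Y j y)) \<partial>MY) \<le> 2 powr \<alpha> / K"
proof -
  define e where "e = 1 / (2 * real K)"
  have e: "e > 0"
    using K by (simp add: e_def)
  have int_hat: "integrable MY (\<lambda>y. hat c e (N (Y j y)))" for c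
    using hat_bounds(1) hat_bounds(2)[OF e] by (intro integrable_unit_bounded_MY) auto
  define E where "E = (\<integral>y. hat 1 (1 / (4 * real K)) (N (Y j y)) \<partial>MY)"
  have "real K * (2 powr (-\<alpha>) * E) = (\<Sum>i<K. 2 powr (-\<alpha>) * E)"
    by simp
  also have "\<dots> \<le> (\<Sum>i<K. (\<integral>y. hat (1 + real i / K) e (N (Y j y)) \<partial>MY))"
    using expectation_hat_translated_ge[OF K] by (intro sum_mono) (simp add: E_def e_def)
  also have "\<dots> = (\<integral>y. (\<Sum>i<K. hat (1 + real i / K) e (N (Y j y))) \<partial>MY)"
    using int_hat by (simp add: Bochner_Integration.integral_sum)
  also have "\<dots> \<le> (\<integral>y. 1 \<partial>MY)"
    using int_hat sum_hat_grid_le_1[OF K] by (intro integral_mono) (auto simp: e_def)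
  also have "\<dots> = 1"
    by (simp add: PY.prob_space)
  finally have "real K * (2 powr (-\<alpha>) * E) \<le> 1" .
  then show ?thesis
    using K by (simp add: E_def powr_minus field_simps)
qed

definition window :: "nat \<Rightarrow> real \<Rightarrow> 'w set" where
  "window l v = {\<omega>\<in>space M. N (X 0 \<omega>) > v \<and> (\<forall>k\<in>{- int l..<0}. N (X k \<omega>) \<le> v)}"

definition theta_window :: "nat \<Rightarrow> real" where
  "theta_window l = measure MY {y\<in>space MY. \<forall>k\<in>{- int l..<0}. N (Y k y) \<le> 1}"

lemma window_sets[measurable]: "window l v \<in> sets M"
  unfolding window_def by measurable

lemma indicator_window:
  assumes "v > 0"
  shows "indicator (window l v) \<omega> =
    of_bool (\<forall>k\<in>{- int l..<0}. N (X k \<omega> /\<^sub>R v) \<le> 1) * (indicator (exceed v) \<omega> :: real)"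
  using assms by (auto simp: window_def exceed_def indicator_def N_scaleR_inverse)

lemma measure_window_between:
  assumes "v > 0" "e > 0"
  shows "(\<integral>\<omega>. (\<Prod>k\<in>{- int l..<0}. ramp_lower e (N (X k \<omega> /\<^sub>R v))) * indicator (exceed v) \<omega> \<partial>M)
           \<le> measure M (window l v)"
    and "measure M (window l v)
           \<le> (\<integral>\<omega>. (\<Prod>k\<in>{- int l..<0}. ramp_upper e (N (X k \<omega> /\<^sub>R v))) * indicator (exceed v) \<omega> \<partial>M)"
proof -
  have window: "measure M (window l v) =
      (\<integral>\<omega>. of_bool (\<forall>k\<in>{- int l..<0}. N (X k \<omega> /\<^sub>R v) \<le> 1) * indicator (exceed v) \<omega> \<partial>M)"
    using assms(1) by (simp flip: indicator_window)
  have integrable: "integrable M (\<lambda>\<omega>. h \<omega> * indicator (exceed v) \<omega>)"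
    if "h \<in> borel_measurable M" "\<And>\<omega>. 0 \<le> h \<omega> \<and> h \<omega> \<le> 1" for h :: "'w \<Rightarrow> real"
    using that by (intro integrable_unit_bounded_M) (auto simp: indicator_def)
  show "(\<integral>\<omega>. (\<Prod>k\<in>{- int l..<0}. ramp_lower e (N (X k \<omega> /\<^sub>R v))) * indicator (exceed v) \<omega> \<partial>M)
           \<le> measure M (window l v)"
    unfolding window using assms(2) prod_ramp_lower_le_indicator[of "{- int l..<0}" e]
    by (intro integral_mono integrable)
      (auto simp: ramp_lower_bounds prod_nonneg prod_le_1 indicator_def)
  show "measure M (window l v)
           \<le> (\<integral>\<omega>. (\<Prod>k\<in>{- int l..<0}. ramp_upper e (N (X k \<omega> /\<^sub>R v))) * indicator (exceed v) \<omega> \<partial>M)"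
    unfolding window using assms(2) indicator_le_prod_ramp_upper[of e "{- int l..<0}"]
    by (intro integral_mono integrable)
      (auto simp: ramp_upper_bounds prod_nonneg prod_le_1 indicator_def)
qed

lemma theta_window_between:
  assumes "e > 0"
  shows "(\<integral>y. (\<Prod>k\<in>{- int l..<0}. ramp_lower e (N (Y k y))) \<partial>MY) \<le> theta_window l"
    and "theta_window l \<le> (\<integral>y. (\<Prod>k\<in>{- int l..<0}. ramp_upper e (N (Y k y))) \<partial>MY)"
proof -
  have theta: "theta_window l = (\<integral>y. of_bool (\<forall>k\<in>{- int l..<0}. N (Y k y) \<le> 1) \<partial>MY)"
  proof -
    have "theta_window l = (\<integral>y. indicator {y\<in>space MY. \<forall>k\<in>{- int l..<0}. N (Y k y) \<le> 1} y \<partial>MY)"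
      by (simp add: theta_window_def)
    also have "\<dots> = (\<integral>y. of_bool (\<forall>k\<in>{- int l..<0}. N (Y k y) \<le> 1) \<partial>MY)"
      by (rule Bochner_Integration.integral_cong) (auto simp: indicator_def)
    finally show ?thesis .
  qed
  show "(\<integral>y. (\<Prod>k\<in>{- int l..<0}. ramp_lower e (N (Y k y))) \<partial>MY) \<le> theta_window l"
    unfolding theta using assms prod_ramp_lower_le_indicator[of "{- int l..<0}" e]
    by (intro integral_mono integrable_unit_bounded_MY)
      (auto simp: ramp_lower_bounds abs_prod prod_le_1)
  show "theta_window l \<le> (\<integral>y. (\<Prod>k\<in>{- int l..<0}. ramp_upper e (N (Y k y))) \<partial>MY)"
    unfolding theta using assms indicator_le_prod_ramp_upper[of e "{- int l..<0}"]
    by (intro integral_mono integrable_unit_bounded_MY)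
      (auto simp: ramp_upper_bounds abs_prod prod_le_1)
qed

lemma ramp_window_gap:
  assumes W: "finite W" and K: "K > (0::nat)"
  defines "e \<equiv> 1 / (8 * real K)"
  shows "(\<integral>y. (\<Prod>k\<in>W. ramp_upper e (N (Y k y))) \<partial>MY) - (\<integral>y. (\<Prod>k\<in>W. ramp_lower e (N (Y k y))) \<partial>MY)
           \<le> 2 * card W * 2 powr \<alpha> / K"
proof -
  have e: "e > 0" "2 * e = 1 / (4 * real K)"
    using K by (simp_all add: e_def)
  have integrable_prod: "integrable MY (\<lambda>y. \<Prod>k\<in>W. \<phi> (N (Y k y)))"
    if "\<phi> \<in> borel_measurable borel" "\<And>t. 0 \<le> \<phi> t \<and> \<phi> t \<le> 1" for \<phi> :: "real \<Rightarrow> real"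
    using that by (intro integrable_unit_bounded_MY) (auto simp: abs_prod prod_le_1)
  have integrable_hat: "integrable MY (\<lambda>y. hat c e' (N (Y k y)))" if "e' > 0" for c e' k
    using hat_bounds(1) hat_bounds(2)[OF that] by (intro integrable_unit_bounded_MY) auto
  have "(\<integral>y. (\<Prod>k\<in>W. ramp_upper e (N (Y k y))) \<partial>MY) - (\<integral>y. (\<Prod>k\<in>W. ramp_lower e (N (Y k y))) \<partial>MY)
      = (\<integral>y. (\<Prod>k\<in>W. ramp_upper e (N (Y k y))) - (\<Prod>k\<in>W. ramp_lower e (N (Y k y))) \<partial>MY)"
    using integrable_prod ramp_upper_bounds ramp_lower_bounds by simp
  also have "\<dots> \<le> (\<integral>y. (\<Sum>k\<in>W. 2 * hat 1 (2 * e) (N (Y k y))) \<partial>MY)"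
  proof (rule integral_mono)
    show "integrable MY (\<lambda>y. (\<Prod>k\<in>W. ramp_upper e (N (Y k y))) - (\<Prod>k\<in>W. ramp_lower e (N (Y k y))))"
      using integrable_prod ramp_upper_bounds ramp_lower_bounds by simp
    show "integrable MY (\<lambda>y. \<Sum>k\<in>W. 2 * hat 1 (2 * e) (N (Y k y)))"
      using e K by (intro Bochner_Integration.integrable_sum integrable_mult_right integrable_hat) auto
    fix y
    have "(\<Prod>k\<in>W. ramp_upper e (N (Y k y))) - (\<Prod>k\<in>W. ramp_lower e (N (Y k y)))
        \<le> (\<Sum>k\<in>W. ramp_upper e (N (Y k y)) - ramp_lower e (N (Y k y)))"
      using W e ramp_lower_bounds ramp_upper_bounds ramp_lower_le_upper
      by (intro prod_diff_le_sum_diff) auto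
    also have "\<dots> \<le> (\<Sum>k\<in>W. 2 * hat 1 (2 * e) (N (Y k y)))"
      using e by (intro sum_mono ramp_gap_le_hat) auto
    finally show "(\<Prod>k\<in>W. ramp_upper e (N (Y k y))) - (\<Prod>k\<in>W. ramp_lower e (N (Y k y)))
        \<le> (\<Sum>k\<in>W. 2 * hat 1 (2 * e) (N (Y k y)))" .
  qed
  also have "\<dots> = (\<Sum>k\<in>W. 2 * (\<integral>y. hat 1 (1 / (4 * real K)) (N (Y k y)) \<partial>MY))"
  proof -
    have "integrable MY (\<lambda>y. 2 * hat 1 (1 / (4 * real K)) (N (Y k y)))" for k
      using K by (intro integrable_mult_right integrable_hat) simp
    then show ?thesis
      by (simp add: e(2) Bochner_Integration.integral_sum)
  qed
  also have "\<dots> \<le> (\<Sum>k\<in>W. 2 * (2 powr \<alpha> / K))"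
    using K by (intro sum_mono mult_left_mono expectation_hat_le) auto
  also have "\<dots> = 2 * card W * 2 powr \<alpha> / K"
    by simp
  finally show ?thesis .
qed

lemma window_ratio_tendsto:
  assumes l: "l \<ge> 1"
  shows "((\<lambda>v. measure M (window l v) / measure M (exceed v)) \<longlongrightarrow> theta_window l) at_top"
proof (rule tendstoI)
  fix d :: real assume d: "d > 0"
  define W where "W = {- int l..<0}"
  obtain K :: nat where K: "K > 4 * l * 2 powr \<alpha> / d"
    using reals_Archimedean2 by blast
  moreover have "0 \<le> 4 * l * 2 powr \<alpha> / d"
    using d by simp
  ultimately have K_pos: "K > 0"
    by linarith
  define e where "e = 1 / (8 * real K)"
  have e: "e > 0" using K_pos by (simp add: e_def)
  define upper where "upper = (\<integral>y. (\<Prod>k\<in>W. ramp_upper e (N (Y k y))) \<partial>MY)"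
  define lower where "lower = (\<integral>y. (\<Prod>k\<in>W. ramp_lower e (N (Y k y))) \<partial>MY)"
  have "upper - lower \<le> 2 * l * 2 powr \<alpha> / K"
    using ramp_window_gap[of W K] K_pos by (simp add: upper_def lower_def e_def W_def)
  also have "\<dots> < d / 2"
    using K K_pos d by (simp add: field_simps)
  finally have gap: "upper - lower < d / 2" .
  have W: "W \<subseteq> {- int l..-1}" "- int l \<le> -1"
    using l unfolding W_def by auto
  have "\<forall>\<^sub>F v in at_top. (\<integral>\<omega>. (\<Prod>k\<in>W. ramp_upper e (N (X k \<omega> /\<^sub>R v))) * indicator (exceed v) \<omega> \<partial>M)
      / measure M (exceed v) < upper + d / 2"
    using order_tendstoD(2)[OF tail_limit_prod[OF continuous_on_ramp_upper _ W]] d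
    by (simp add: ramp_upper_bounds upper_def)
  moreover have "\<forall>\<^sub>F v in at_top. (\<integral>\<omega>. (\<Prod>k\<in>W. ramp_lower e (N (X k \<omega> /\<^sub>R v))) * indicator (exceed v) \<omega> \<partial>M)
      / measure M (exceed v) > lower - d / 2"
    using order_tendstoD(1)[OF tail_limit_prod[OF continuous_on_ramp_lower _ W]] d
    by (simp add: ramp_lower_bounds lower_def)
  ultimately show "\<forall>\<^sub>F v in at_top. dist (measure M (window l v) / measure M (exceed v)) (theta_window l) < d"
    using exceed_pos eventually_gt_at_top[of 0]
  proof eventually_elim
    case (elim v)
    then have "measure M (exceed v) > 0" "v > 0"
      by (simp_all add: exceed_def)
    then have "(\<integral>\<omega>. (\<Prod>k\<in>W. ramp_lower e (N (X k \<omega> /\<^sub>R v))) * indicator (exceed v) \<omega> \<partial>M)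
          / measure M (exceed v) \<le> measure M (window l v) / measure M (exceed v)"
      and "measure M (window l v) / measure M (exceed v) \<le>
          (\<integral>\<omega>. (\<Prod>k\<in>W. ramp_upper e (N (X k \<omega> /\<^sub>R v))) * indicator (exceed v) \<omega> \<partial>M)
          / measure M (exceed v)"
      using measure_window_between[OF _ e, of v l] unfolding W_def by (auto intro: divide_right_mono)
    moreover have "lower \<le> theta_window l" "theta_window l \<le> upper"
      using theta_window_between[OF e] unfolding lower_def upper_def W_def by auto
    ultimately show ?case
      using elim gap by (simp add: dist_real_def abs_less_iff)
  qed
qed

lemma theta_window_tendsto: "theta_window \<longlonglongrightarrow> theta MY Y N"
  and theta_le_theta_window: "theta MY Y N \<le> theta_window l"
proof -
  define A where "A l = {y\<in>space MY. \<forall>k\<in>{- int l..<0}. N (Y k y) \<le> 1}" for l :: nat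
  have "A l \<in> sets MY" for l
    unfolding A_def by measurable
  then have A_sets: "range A \<subseteq> sets MY"
    by blast
  have "decseq A"
    unfolding A_def decseq_def by auto
  moreover have "(\<Inter>l. A l) = {y\<in>space MY. \<forall>k<0. N (Y k y) \<le> 1}"
  proof (intro set_eqI iffI)
    fix y assume y: "y \<in> (\<Inter>l. A l)"
    have "N (Y k y) \<le> 1" if "k < 0" for k
      using y that unfolding A_def by (auto dest!: spec[of _ "nat (- k)"])
    then show "y \<in> {y\<in>space MY. \<forall>k<0. N (Y k y) \<le> 1}"
      using y unfolding A_def by auto
  qed (auto simp: A_def)
  ultimately have "(\<lambda>l. measure MY (A l)) \<longlonglongrightarrow> theta MY Y N"
    using PY.finite_Lim_measure_decseq[OF A_sets] by (simp add: theta_def)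
  moreover have "theta_window = (\<lambda>l. measure MY (A l))"
    by (simp add: fun_eq_iff theta_window_def A_def)
  ultimately show "theta_window \<longlonglongrightarrow> theta MY Y N"
    by simp
  show "theta MY Y N \<le> theta_window l"
    unfolding theta_window_def theta_def by (intro PY.finite_measure_mono) auto
qed

section \<open>Stationarity and the first exceedance\<close>

abbreviation path_space :: "(int \<Rightarrow> 'x) measure" where
  "path_space \<equiv> PiM UNIV (\<lambda>_. borel)"

lemma shifted_path_measurable[measurable]: "(\<lambda>\<omega> k. X (k + m) \<omega>) \<in> measurable M path_space"
  by (rule measurable_PiM_single') auto

lemma distr_shift_eq: "distr M path_space (\<lambda>\<omega> k. X (k + int m) \<omega>) = distr M path_space (\<lambda>\<omega> k. X k \<omega>)"
proof (induction m)
  case (Suc m)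
  define S where "S = (\<lambda>(z :: int \<Rightarrow> 'x) k. z (k + 1))"
  have S: "S \<in> measurable path_space path_space"
    unfolding S_def by (rule measurable_PiM_single') auto
  have "distr M path_space (\<lambda>\<omega> k. X (k + int (Suc m)) \<omega>) = distr M path_space (S \<circ> (\<lambda>\<omega> k. X (k + int m) \<omega>))"
    by (simp add: S_def o_def ac_simps)
  also have "\<dots> = distr (distr M path_space (\<lambda>\<omega> k. X (k + int m) \<omega>)) path_space S"
    by (rule distr_distr[symmetric, OF S]) simp
  also have "\<dots> = distr (distr M path_space (\<lambda>\<omega> k. X k \<omega>)) path_space S"
    by (simp add: Suc)
  also have "\<dots> = distr M path_space (S \<circ> (\<lambda>\<omega> k. X k \<omega>))"
    by (rule distr_distr[OF S]) (rule measurable_PiM_single', auto)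
  also have "\<dots> = distr M path_space (\<lambda>\<omega> k. X k \<omega>)"
    using stationary by (simp add: S_def o_def strictly_stationary_def)
  finally show ?case .
qed simp

lemma measure_shift_eq:
  assumes B: "B \<in> sets path_space"
  shows "measure M {\<omega>\<in>space M. (\<lambda>k. X (k + int m) \<omega>) \<in> B} = measure M {\<omega>\<in>space M. (\<lambda>k. X k \<omega>) \<in> B}"
proof -
  have X: "(\<lambda>\<omega> k. X k \<omega>) \<in> measurable M path_space"
    by (rule measurable_PiM_single') auto
  have "measure M {\<omega>\<in>space M. (\<lambda>k. X (k + int m) \<omega>) \<in> B} =
      measure (distr M path_space (\<lambda>\<omega> k. X (k + int m) \<omega>)) B"
    by (subst measure_distr[OF _ B]) (auto intro!: arg_cong[where f="measure M"])
  also have "\<dots> = measure (distr M path_space (\<lambda>\<omega> k. X k \<omega>)) B"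
    by (simp add: distr_shift_eq)
  also have "\<dots> = measure M {\<omega>\<in>space M. (\<lambda>k. X k \<omega>) \<in> B}"
    by (subst measure_distr[OF X B]) (auto intro!: arg_cong[where f="measure M"])
  finally show ?thesis .
qed

lemma measure_window_shift:
  "measure M {\<omega>\<in>space M. N (X (int i) \<omega>) > v \<and> (\<forall>k\<in>{int i - int l..<int i}. N (X k \<omega>) \<le> v)}
     = measure M (window l v)"
proof -
  define B where "B = {z\<in>space path_space. N (z 0) > v \<and> (\<forall>k\<in>{- int l..<0}. N (z k) \<le> v)}"
  have B: "B \<in> sets path_space"
    unfolding B_def by measurable
  have "(\<forall>k\<in>{int i - int l..<int i}. N (X k \<omega>) \<le> v) \<longleftrightarrow> (\<forall>k\<in>{- int l..<0}. N (X (k + int i) \<omega>) \<le> v)" for \<omega>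
  proof
    assume shifted: "\<forall>k\<in>{- int l..<0}. N (X (k + int i) \<omega>) \<le> v"
    show "\<forall>k\<in>{int i - int l..<int i}. N (X k \<omega>) \<le> v"
    proof
      fix k assume "k \<in> {int i - int l..<int i}"
      then show "N (X k \<omega>) \<le> v"
        using shifted[rule_format, of "k - int i"] by simp
    qed
  qed auto
  then have "{\<omega>\<in>space M. N (X (int i) \<omega>) > v \<and> (\<forall>k\<in>{int i - int l..<int i}. N (X k \<omega>) \<le> v)}
      = {\<omega>\<in>space M. (\<lambda>k. X (k + int i) \<omega>) \<in> B}"
    unfolding B_def by (auto simp: space_PiM)
  moreover have "window l v = {\<omega>\<in>space M. (\<lambda>k. X k \<omega>) \<in> B}"
    unfolding B_def window_def by (auto simp: space_PiM)
  ultimately show ?thesis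
    using measure_shift_eq[OF B, of i] by simp
qed

definition joint_exceed :: "real \<Rightarrow> nat \<Rightarrow> nat \<Rightarrow> 'w set" where
  "joint_exceed v i d = {\<omega>\<in>space M. N (X (int i) \<omega>) > v \<and> N (X (int i + int d) \<omega>) > v}"

lemma joint_exceed_sets[measurable]: "joint_exceed v i d \<in> sets M"
  unfolding joint_exceed_def by measurable

lemma measure_joint_exceed_shift: "measure M (joint_exceed v i d) = measure M (joint_exceed v 0 d)"
proof -
  define B where "B = {z\<in>space path_space. N (z 0) > v \<and> N (z (int d)) > v}"
  have B: "B \<in> sets path_space"
    unfolding B_def by measurable
  have "joint_exceed v i d = {\<omega>\<in>space M. (\<lambda>k. X (k + int i) \<omega>) \<in> B}"
    unfolding B_def joint_exceed_def by (auto simp: space_PiM add.commute)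
  moreover have "joint_exceed v 0 d = {\<omega>\<in>space M. (\<lambda>k. X k \<omega>) \<in> B}"
    unfolding B_def joint_exceed_def by (auto simp: space_PiM)
  ultimately show ?thesis
    using measure_shift_eq[OF B, of i] by simp
qed

definition first_exceed :: "real \<Rightarrow> nat \<Rightarrow> 'w set" where
  "first_exceed v i = {\<omega>\<in>space M. N (X (int i) \<omega>) > v \<and> (\<forall>k\<in>{1..<i}. N (X (int k) \<omega>) \<le> v)}"

lemma first_exceed_sets[measurable]: "first_exceed v i \<in> sets M"
  unfolding first_exceed_def by measurable

lemma first_exceed_iff:
  assumes "\<omega> \<in> space M" "i \<in> {1..r}"
  shows "\<omega> \<in> first_exceed v i \<longleftrightarrow> exc_times X N r v \<omega> \<noteq> {} \<and> i = Min (exc_times X N r v \<omega>)"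
proof -
  let ?S = "exc_times X N r v \<omega>"
  have finite: "finite ?S"
    by (simp add: exc_times_def)
  show ?thesis
  proof
    assume first: "\<omega> \<in> first_exceed v i"
    then have "i \<in> ?S"
      using assms unfolding first_exceed_def exc_times_def by auto
    moreover have "i \<le> k" if "k \<in> ?S" for k
      using first that unfolding first_exceed_def exc_times_def by (force simp: not_le[symmetric])
    ultimately show "?S \<noteq> {} \<and> i = Min ?S"
      using finite by (auto intro!: Min_eqI[symmetric])
  next
    assume min: "?S \<noteq> {} \<and> i = Min ?S"
    then have "i \<in> ?S"
      using finite Min_in by metis
    moreover have "N (X (int k) \<omega>) \<le> v" if "k \<in> {1..<i}" for k
    proof (rule ccontr)
      assume "\<not> N (X (int k) \<omega>) \<le> v"
      then have "k \<in> ?S"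
        using that assms unfolding exc_times_def by auto
      then show False
        using min that finite by auto
    qed
    ultimately show "\<omega> \<in> first_exceed v i"
      using assms unfolding first_exceed_def exc_times_def by auto
  qed
qed

lemma sum_first_exceed_indicator:
  assumes "\<omega> \<in> space M"
  shows "(\<Sum>i=1..r. a i * indicator (first_exceed v i) \<omega>) =
    (if exc_times X N r v \<omega> \<noteq> {} then a (Min (exc_times X N r v \<omega>)) else (0::real))"
proof (cases "exc_times X N r v \<omega> = {}")
  case False
  let ?m = "Min (exc_times X N r v \<omega>)"
  have m: "?m \<in> {1..r}"
    using False Min_in[of "exc_times X N r v \<omega>"] by (auto simp: exc_times_def)
  have "(\<Sum>i=1..r. a i * indicator (first_exceed v i) \<omega>) =
      a ?m * indicator (first_exceed v ?m) \<omega> + (\<Sum>i\<in>{1..r} - {?m}. a i * indicator (first_exceed v i) \<omega>)"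
    using m by (subst sum.remove[of _ ?m]) auto
  also have "(\<Sum>i\<in>{1..r} - {?m}. a i * indicator (first_exceed v i) \<omega>) = 0"
    using first_exceed_iff[OF assms] by (intro sum.neutral) auto
  also have "indicator (first_exceed v ?m) \<omega> = (1::real)"
    using first_exceed_iff[OF assms m] False by simp
  finally show ?thesis
    using False by simp
next
  case True
  then have "\<omega> \<notin> first_exceed v i" if "i \<in> {1..r}" for i
    using first_exceed_iff[OF assms that] by blast
  with True show ?thesis
    by simp
qed

text \<open>
  If the first exceedance is not at \<open>i\<close>, but \<open>X i\<close> exceeds with a quiet window of length \<open>l\<close>
  before it, then some earlier exceedance at distance more than \<open>l\<close> from \<open>i\<close> must exist.\<close>

lemma measure_first_exceed_lower:
  assumes i: "i \<in> {1..r}"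
  shows "measure M (window l v) - (\<Sum>d=l..r. measure M (joint_exceed v 0 d)) \<le> measure M (first_exceed v i)"
proof -
  define G where "G = {\<omega>\<in>space M. N (X (int i) \<omega>) > v \<and> (\<forall>k\<in>{int i - int l..<int i}. N (X k \<omega>) \<le> v)}"
  define H where "H = (\<Union>k\<in>{1..<i-l}. joint_exceed v k (i - k))"
  have [measurable]: "G \<in> sets M" "H \<in> sets M"
    unfolding G_def H_def by measurable
  have "G \<subseteq> first_exceed v i \<union> H"
  proof
    fix \<omega> assume \<omega>: "\<omega> \<in> G"
    show "\<omega> \<in> first_exceed v i \<union> H"
    proof (cases "\<omega> \<in> first_exceed v i")
      case False
      then obtain k where k: "k \<in> {1..<i}" "N (X (int k) \<omega>) > v"
        using \<omega> unfolding G_def first_exceed_def by auto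
      with \<omega> have "k \<in> {1..<i-l}"
        unfolding G_def by (auto simp: not_le[symmetric])
      moreover have "\<omega> \<in> joint_exceed v k (i - k)"
        using \<omega> k unfolding G_def joint_exceed_def by (auto simp: of_nat_diff)
      ultimately show ?thesis
        unfolding H_def by blast
    qed simp
  qed
  then have "measure M G \<le> measure M (first_exceed v i) + measure M H"
    by (intro order.trans[OF PM.finite_measure_mono measure_Un_le]) simp_all
  moreover have "measure M H \<le> (\<Sum>k\<in>{1..<i-l}. measure M (joint_exceed v k (i - k)))"
    unfolding H_def by (rule PM.finite_measure_subadditive_finite) auto
  moreover have "(\<Sum>k\<in>{1..<i-l}. measure M (joint_exceed v k (i - k))) =
      (\<Sum>k\<in>{1..<i-l}. measure M (joint_exceed v 0 (i - k)))"
    by (intro sum.cong refl measure_joint_exceed_shift)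
  moreover have "(\<Sum>k\<in>{1..<i-l}. measure M (joint_exceed v 0 (i - k))) \<le> (\<Sum>d=l..r. measure M (joint_exceed v 0 d))"
  proof -
    have "(\<Sum>k\<in>{1..<i-l}. measure M (joint_exceed v 0 (i - k))) = (\<Sum>d\<in>(\<lambda>k. i - k) ` {1..<i-l}. measure M (joint_exceed v 0 d))"
      by (subst sum.reindex) (auto simp: inj_on_def)
    also have "\<dots> \<le> (\<Sum>d=l..r. measure M (joint_exceed v 0 d))"
      using i by (intro sum_mono2) auto
    finally show ?thesis .
  qed
  moreover have "measure M G = measure M (window l v)"
    unfolding G_def by (rule measure_window_shift)
  ultimately show ?thesis
    by linarith
qed

lemma measure_first_exceed_le_exceed: "measure M (first_exceed v i) \<le> measure M (exceed v)"
proof -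
  have "measure M (first_exceed v i) \<le> measure M {\<omega>\<in>space M. N (X (int i) \<omega>) > v \<and> (\<forall>k\<in>{int i - int 0..<int i}. N (X k \<omega>) \<le> v)}"
    unfolding first_exceed_def by (intro PM.finite_measure_mono) auto
  also have "\<dots> = measure M (exceed v)"
    unfolding measure_window_shift by (simp add: window_def exceed_def)
  finally show ?thesis .
qed

lemma measure_first_exceed_le_window:
  assumes "l < i"
  shows "measure M (first_exceed v i) \<le> measure M (window l v)"
proof -
  have "measure M (first_exceed v i) \<le> measure M {\<omega>\<in>space M. N (X (int i) \<omega>) > v \<and> (\<forall>k\<in>{int i - int l..<int i}. N (X k \<omega>) \<le> v)}"
  proof (intro PM.finite_measure_mono subsetI)
    fix \<omega> assume \<omega>: "\<omega> \<in> first_exceed v i"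
    have "N (X k \<omega>) \<le> v" if "k \<in> {int i - int l..<int i}" for k
      using \<omega> that assms unfolding first_exceed_def by (auto dest!: bspec[of _ _ "nat k"])
    with \<omega> show "\<omega> \<in> {\<omega>\<in>space M. N (X (int i) \<omega>) > v \<and> (\<forall>k\<in>{int i - int l..<int i}. N (X k \<omega>) \<le> v)}"
      unfolding first_exceed_def by auto
  qed simp
  then show ?thesis
    by (simp add: measure_window_shift)
qed

lemma sum_measure_first_exceed_le:
  assumes "\<And>i. a i \<ge> 0"
  shows "(\<Sum>i=1..r. a i * measure M (first_exceed v i))
           \<le> (\<Sum>i=1..r. a i) * measure M (window l v) + (\<Sum>i=1..l. a i) * measure M (exceed v)"
proof -
  have "(\<Sum>i=1..r. a i * measure M (first_exceed v i))
      \<le> (\<Sum>i=1..r. a i * measure M (window l v) + (if i \<le> l then a i * measure M (exceed v) else 0))"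
    using measure_first_exceed_le_window measure_first_exceed_le_exceed assms
    by (intro sum_mono) (auto simp: not_le intro!: mult_left_mono order.trans[OF _ add_increasing])
  also have "\<dots> = (\<Sum>i=1..r. a i) * measure M (window l v) + (\<Sum>i\<in>{1..r} \<inter> {..l}. a i) * measure M (exceed v)"
    by (simp add: sum.distrib sum_distrib_right sum.If_cases Int_def)
  also have "\<dots> \<le> (\<Sum>i=1..r. a i) * measure M (window l v) + (\<Sum>i=1..l. a i) * measure M (exceed v)"
    using assms by (intro add_left_mono mult_right_mono sum_mono2) auto
  finally show ?thesis .
qed

text \<open>\<open>L \<ge> 1\<close> is forced by the factor \<open>real i powr 0\<close> in \<open>cond_S\<close>, which vanishes at \<open>i = 0\<close>.\<close>

lemma anticlustering_eventually:
  assumes S0: "cond_S 0 M X N r u" and d: "d > 0"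
  shows "\<exists>L\<ge>1. \<forall>l\<ge>L. \<forall>\<^sub>F n in sequentially.
           (\<Sum>k=l..r n. measure M (joint_exceed (u n) 0 k)) / measure M (exceed (u n)) < d"
proof -
  define \<sigma> where "\<sigma> l n = (\<Sum>k=l..r n. measure M (joint_exceed (u n) 0 k)) / measure M (exceed (u n))" for l n
  have \<sigma>_eq: "\<sigma> l n = 1 / wn M X N u n * (\<Sum>i=l..r n. real i powr 0 *
      measure M {\<omega>\<in>space M. N (X 0 \<omega>) > u n * 1 \<and> N (X (int i) \<omega>) > u n * 1})" if "l \<ge> 1" for l n
    using that by (auto simp: \<sigma>_def wn_def exceed_def joint_exceed_def intro!: sum.cong)
  define s where "s l n = 1 / wn M X N u n * (\<Sum>i=l..r n. real i powr 0 *
      measure M {\<omega>\<in>space M. N (X 0 \<omega>) > u n * 1 \<and> N (X (int i) \<omega>) > u n * 1})" for l n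
  have "((\<lambda>l. limsup (\<lambda>n. ereal (s l n))) \<longlongrightarrow> 0) sequentially"
    using S0[unfolded cond_S_def, rule_format, of 1 1] unfolding s_def by simp
  from order_tendstoD(2)[OF this, of "ereal d"] d obtain L
    where L: "\<And>l. l \<ge> L \<Longrightarrow> limsup (\<lambda>n. ereal (s l n)) < ereal d"
    unfolding eventually_sequentially by auto
  have "\<forall>\<^sub>F n in sequentially. \<sigma> l n < d" if "l \<ge> max L 1" for l
    using Limsup_lessD[OF L[of l]] that by (simp add: \<sigma>_eq s_def)
  then show ?thesis
    unfolding \<sigma>_def by (intro exI[of _ "max L 1"]) auto
qed

lemma window_length_exists:
  assumes S0: "cond_S 0 M X N r u" and d: "d > 0"
  shows "\<exists>l\<ge>1. theta_window l < theta MY Y N + d \<and> (\<forall>\<^sub>F n in sequentially.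
           (\<Sum>k=l..r n. measure M (joint_exceed (u n) 0 k)) / measure M (exceed (u n)) < d)"
proof -
  obtain L where "L \<ge> 1" and L: "\<And>l. l \<ge> L \<Longrightarrow> \<forall>\<^sub>F n in sequentially.
      (\<Sum>k=l..r n. measure M (joint_exceed (u n) 0 k)) / measure M (exceed (u n)) < d"
    using anticlustering_eventually[OF S0 d] by blast
  moreover obtain L' where "\<And>l. l \<ge> L' \<Longrightarrow> theta_window l < theta MY Y N + d"
    using order_tendstoD(2)[OF theta_window_tendsto, of "theta MY Y N + d"] d
    unfolding eventually_sequentially by auto
  ultimately show ?thesis
    by (intro exI[of _ "max L L'"]) auto
qed

section \<open>The first and the last exceedance time\<close>

definition first_last :: "(real \<Rightarrow> real \<Rightarrow> real) \<Rightarrow> nat \<Rightarrow> real \<Rightarrow> 'w \<Rightarrow> real" where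
  "first_last f r v \<omega> = f (real (t_first X N r v \<omega>)) (real (t_last X N r v \<omega>)) * indicator (A1 M X N r v) \<omega>"

lemma first_last_eq:
  assumes "\<omega> \<in> space M"
  shows "first_last f r v \<omega> =
    (if exc_times X N r v \<omega> \<noteq> {} then f (real (Min (exc_times X N r v \<omega>))) (real (Max (exc_times X N r v \<omega>))) else 0)"
  using assms unfolding first_last_def A1_def t_first_def t_last_def by (simp add: indicator_def)

lemma exc_times_measurable: "exc_times X N r v \<in> measurable M (count_space (Pow {1..r}))"
proof -
  have preimage: "exc_times X N r v -` {S} \<inter> space M =
      {\<omega>\<in>space M. \<forall>i\<in>{1..r}. i \<in> S \<longleftrightarrow> N (X (int i) \<omega>) > v}" if "S \<subseteq> {1..r}" for S
  proof (intro set_eqI iffI)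
    fix \<omega> assume "\<omega> \<in> exc_times X N r v -` {S} \<inter> space M"
    then show "\<omega> \<in> {\<omega>\<in>space M. \<forall>i\<in>{1..r}. i \<in> S \<longleftrightarrow> N (X (int i) \<omega>) > v}"
      unfolding exc_times_def by auto
  next
    fix \<omega> assume \<omega>: "\<omega> \<in> {\<omega>\<in>space M. \<forall>i\<in>{1..r}. i \<in> S \<longleftrightarrow> N (X (int i) \<omega>) > v}"
    have "exc_times X N r v \<omega> = S"
    proof (intro set_eqI iffI)
      fix i assume "i \<in> exc_times X N r v \<omega>"
      then show "i \<in> S"
        using \<omega> unfolding exc_times_def by auto
    next
      fix i assume "i \<in> S"
      with \<omega> that show "i \<in> exc_times X N r v \<omega>"
        unfolding exc_times_def by auto
    qed
    with \<omega> show "\<omega> \<in> exc_times X N r v -` {S} \<inter> space M"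
      by auto
  qed
  have "{\<omega>\<in>space M. \<forall>i\<in>{1..r}. i \<in> S \<longleftrightarrow> N (X (int i) \<omega>) > v} \<in> sets M" for S
    by measurable
  then show ?thesis
    by (subst measurable_count_space_eq2) (auto simp: preimage exc_times_def)
qed

lemma first_last_measurable[measurable]: "first_last f r v \<in> borel_measurable M"
proof -
  define H where "H S = (if S = {} then 0 else f (real (Min S)) (real (Max S)))" for S :: "nat set"
  have "(\<lambda>\<omega>. H (exc_times X N r v \<omega>)) \<in> borel_measurable M"
    using exc_times_measurable by (rule measurable_compose) simp
  moreover have "H (exc_times X N r v \<omega>) = first_last f r v \<omega>" if "\<omega> \<in> space M" for \<omega>
    using first_last_eq[OF that] by (simp add: H_def)
  ultimately show ?thesis
    by (simp cong: measurable_cong)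
qed

lemma exc_times_Min_Max:
  assumes "exc_times X N r v \<omega> \<noteq> {}"
  shows "Min (exc_times X N r v \<omega>) \<in> exc_times X N r v \<omega>" "Max (exc_times X N r v \<omega>) \<in> exc_times X N r v \<omega>"
    and "1 \<le> Min (exc_times X N r v \<omega>)" "Min (exc_times X N r v \<omega>) \<le> Max (exc_times X N r v \<omega>)"
    and "Max (exc_times X N r v \<omega>) \<le> r"
proof -
  have finite: "finite (exc_times X N r v \<omega>)"
    by (simp add: exc_times_def)
  show Min: "Min (exc_times X N r v \<omega>) \<in> exc_times X N r v \<omega>"
    and Max: "Max (exc_times X N r v \<omega>) \<in> exc_times X N r v \<omega>"
    using Min_in Max_in finite assms by blast+
  show "1 \<le> Min (exc_times X N r v \<omega>)" "Max (exc_times X N r v \<omega>) \<le> r"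
    using Min Max by (simp_all add: exc_times_def)
  show "Min (exc_times X N r v \<omega>) \<le> Max (exc_times X N r v \<omega>)"
    using Min_le[OF finite Max] .
qed

context
  fixes f :: "real \<Rightarrow> real \<Rightarrow> real" and \<gamma>1 \<gamma>2 :: real
  assumes f_hom: "\<And>a b s t. a > 0 \<Longrightarrow> b > 0 \<Longrightarrow> s > 0 \<Longrightarrow> t > 0 \<Longrightarrow>
                  f (a * s) (b * t) = a powr \<gamma>1 * b powr \<gamma>2 * f s t"
    and \<gamma>: "\<gamma>1 \<ge> 0" "\<gamma>2 \<ge> 0" and f11: "f 1 1 \<ge> 0"
begin

lemma f_first_last:
  assumes S: "exc_times X N r v \<omega> \<noteq> {}"
  defines "a \<equiv> real (Min (exc_times X N r v \<omega>))" and "b \<equiv> real (Max (exc_times X N r v \<omega>))"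
  shows "f a b = a powr \<gamma>1 * b powr \<gamma>2 * f 1 1" and "1 \<le> a" "a \<le> b" "b \<le> r"
proof -
  show "1 \<le> a" "a \<le> b" "b \<le> r"
    using exc_times_Min_Max[OF S] by (simp_all add: a_def b_def)
  then show "f a b = a powr \<gamma>1 * b powr \<gamma>2 * f 1 1"
    using f_hom[of a b 1 1] by simp
qed

lemma first_last_lower:
  assumes \<omega>: "\<omega> \<in> space M"
  shows "(\<Sum>i=1..r. f 1 1 * real i powr (\<gamma>1 + \<gamma>2) * indicator (first_exceed v i) \<omega>) \<le> first_last f r v \<omega>"
proof (cases "exc_times X N r v \<omega> = {}")
  case False
  let ?a = "real (Min (exc_times X N r v \<omega>))" and ?b = "real (Max (exc_times X N r v \<omega>))"
  note f_ab = f_first_last[OF False]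
  have "f 1 1 * ?a powr (\<gamma>1 + \<gamma>2) \<le> f 1 1 * (?a powr \<gamma>1 * ?b powr \<gamma>2)"
    using powr_mult_powr_between(1)[OF f_ab(2,3) order_refl \<gamma>] f11 by (rule mult_left_mono)
  then show ?thesis
    unfolding sum_first_exceed_indicator[OF \<omega>] first_last_eq[OF \<omega>] using False f_ab(1)
    by (simp add: ac_simps)
qed (unfold sum_first_exceed_indicator[OF \<omega>] first_last_eq[OF \<omega>], simp)

text \<open>
  Either the last exceedance lies within \<open>l\<close> steps of the first one, or the first exceedance
  and the last one form a pair of exceedances at distance at least \<open>l\<close>.\<close>

lemma first_last_upper:
  assumes \<omega>: "\<omega> \<in> space M"
  shows "first_last f r v \<omega> \<le> (\<Sum>i=1..r. f 1 1 * real (i + l) powr (\<gamma>1 + \<gamma>2) * indicator (first_exceed v i) \<omega>)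
      + f 1 1 * real r powr (\<gamma>1 + \<gamma>2) * (\<Sum>i=1..r. \<Sum>d=l..r. indicator (joint_exceed v i d) \<omega>)"
proof -
  let ?S = "exc_times X N r v \<omega>"
  let ?J = "(\<Sum>i=1..r. \<Sum>d=l..r. indicator (joint_exceed v i d) \<omega>) :: real"
  have J: "0 \<le> f 1 1 * real r powr (\<gamma>1 + \<gamma>2) * ?J"
    using f11 by (intro mult_nonneg_nonneg sum_nonneg) auto
  show ?thesis
  proof (cases "?S = {}")
    case False
    let ?a = "Min ?S" and ?b = "Max ?S"
    note ab = exc_times_Min_Max[OF False] and f_ab = f_first_last[OF False]
    show ?thesis
    proof (cases "?b < ?a + l")
      case True
      have "f 1 1 * (real ?a powr \<gamma>1 * real ?b powr \<gamma>2) \<le> f 1 1 * real (?a + l) powr (\<gamma>1 + \<gamma>2)"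
        using powr_mult_powr_between(2)[OF f_ab(2,3) _ \<gamma>, of "real (?a + l)"] True f11
        by (intro mult_left_mono) auto
      then show ?thesis
        unfolding sum_first_exceed_indicator[OF \<omega>] first_last_eq[OF \<omega>] using False J f_ab(1)
        by (simp add: ac_simps)
    next
      case False
      then have "\<omega> \<in> joint_exceed v ?a (?b - ?a)" "?b - ?a \<in> {l..r}" "?a \<in> {1..r}"
        using ab \<omega> by (auto simp: joint_exceed_def exc_times_def)
      then have J1: "1 \<le> ?J"
        by (intro order.trans[OF _ member_le_sum[of ?a]] order.trans[OF _ member_le_sum[of "?b - ?a"]])
          (auto intro!: sum_nonneg)
      have "f 1 1 * (real ?a powr \<gamma>1 * real ?b powr \<gamma>2) \<le> f 1 1 * real r powr (\<gamma>1 + \<gamma>2)"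
        using powr_mult_powr_between(2)[OF f_ab(2,3,4) \<gamma>] f11 by (rule mult_left_mono)
      then have "f (real ?a) (real ?b) \<le> f 1 1 * real r powr (\<gamma>1 + \<gamma>2)"
        using f_ab(1) by (simp add: ac_simps)
      also have "\<dots> \<le> f 1 1 * real r powr (\<gamma>1 + \<gamma>2) * ?J"
        using J1 f11 mult_left_mono[of 1 ?J "f 1 1 * real r powr (\<gamma>1 + \<gamma>2)"] by simp
      finally show ?thesis
        unfolding sum_first_exceed_indicator[OF \<omega>] first_last_eq[OF \<omega>] using \<open>?S \<noteq> {}\<close> f11
        by (auto intro!: add_increasing sum_nonneg)
    qed
  qed (unfold sum_first_exceed_indicator[OF \<omega>] first_last_eq[OF \<omega>], use J in simp)
qed

lemma first_last_bounds:
  assumes "\<omega> \<in> space M"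
  shows "0 \<le> first_last f r v \<omega>" and "first_last f r v \<omega> \<le> f 1 1 * real r powr (\<gamma>1 + \<gamma>2)"
proof -
  have "0 \<le> first_last f r v \<omega> \<and> first_last f r v \<omega> \<le> f 1 1 * real r powr (\<gamma>1 + \<gamma>2)"
  proof (cases "exc_times X N r v \<omega> = {}")
    case False
    note f_ab = f_first_last[OF False]
    have "f 1 1 * (real (Min (exc_times X N r v \<omega>)) powr \<gamma>1 * real (Max (exc_times X N r v \<omega>)) powr \<gamma>2)
        \<le> f 1 1 * real r powr (\<gamma>1 + \<gamma>2)"
      using powr_mult_powr_between(2)[OF f_ab(2,3,4) \<gamma>] f11 by (rule mult_left_mono)
    then show ?thesis
      using False f_ab(1) f11 assms by (simp add: first_last_eq ac_simps)
  qed (use assms f11 in \<open>simp add: first_last_eq\<close>)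
  then show "0 \<le> first_last f r v \<omega>" "first_last f r v \<omega> \<le> f 1 1 * real r powr (\<gamma>1 + \<gamma>2)"
    by auto
qed

lemma first_last_integrable: "integrable M (first_last f r v)"
  using first_last_bounds by (intro PM.integrable_const_bound[where B = "f 1 1 * real r powr (\<gamma>1 + \<gamma>2)"]) auto

lemma integral_first_last_lower:
  "f 1 1 * (\<Sum>i=1..r. real i powr (\<gamma>1 + \<gamma>2)) * measure M (window l v)
     - f 1 1 * real r powr (\<gamma>1 + \<gamma>2 + 1) * (\<Sum>d=l..r. measure M (joint_exceed v 0 d))
   \<le> (\<integral>\<omega>. first_last f r v \<omega> \<partial>M)"
proof -
  let ?a = "\<lambda>i. f 1 1 * real i powr (\<gamma>1 + \<gamma>2)"
  let ?Q = "\<Sum>d=l..r. measure M (joint_exceed v 0 d)"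
  have "f 1 1 * (\<Sum>i=1..r. real i powr (\<gamma>1 + \<gamma>2)) * ?Q \<le> f 1 1 * real r powr (\<gamma>1 + \<gamma>2 + 1) * ?Q"
    using sum_powr_le_powr_Suc[of "\<gamma>1 + \<gamma>2" r] \<gamma> f11
    by (intro mult_right_mono mult_left_mono sum_nonneg) auto
  then have "f 1 1 * (\<Sum>i=1..r. real i powr (\<gamma>1 + \<gamma>2)) * measure M (window l v)
     - f 1 1 * real r powr (\<gamma>1 + \<gamma>2 + 1) * ?Q \<le> (\<Sum>i=1..r. ?a i * (measure M (window l v) - ?Q))"
    by (simp add: sum_distrib_left sum_distrib_right algebra_simps sum_subtractf)
  also have "\<dots> \<le> (\<Sum>i=1..r. ?a i * measure M (first_exceed v i))"
    using measure_first_exceed_lower f11 by (intro sum_mono mult_left_mono) auto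
  also have "\<dots> = (\<integral>\<omega>. (\<Sum>i=1..r. ?a i * indicator (first_exceed v i) \<omega>) \<partial>M)"
    by (rule PM.integral_sum_indicator[symmetric]) simp
  also have "\<dots> \<le> (\<integral>\<omega>. first_last f r v \<omega> \<partial>M)"
    using first_last_lower first_last_integrable
    by (intro integral_mono Bochner_Integration.integrable_sum integrable_mult_right integrable_real_indicator)
      (auto simp: less_top[symmetric])
  finally show ?thesis .
qed

lemma integral_first_last_upper:
  "(\<integral>\<omega>. first_last f r v \<omega> \<partial>M)
   \<le> f 1 1 * (\<Sum>i=1..r. real (i + l) powr (\<gamma>1 + \<gamma>2)) * measure M (window l v)
     + f 1 1 * (\<Sum>i=1..l. real (i + l) powr (\<gamma>1 + \<gamma>2)) * measure M (exceed v)
     + f 1 1 * real r powr (\<gamma>1 + \<gamma>2 + 1) * (\<Sum>d=l..r. measure M (joint_exceed v 0 d))"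
proof -
  let ?a = "\<lambda>i. f 1 1 * real (i + l) powr (\<gamma>1 + \<gamma>2)"
  let ?Q = "\<Sum>d=l..r. measure M (joint_exceed v 0 d)"
  have a: "0 \<le> ?a i" for i
    using f11 by simp
  have int_J: "integrable M (indicator (joint_exceed v i d) :: 'w \<Rightarrow> real)" for i d
    by (simp add: less_top[symmetric])
  have int_F: "integrable M (\<lambda>\<omega>. \<Sum>i=1..r. ?a i * indicator (first_exceed v i) \<omega>)"
    by (intro Bochner_Integration.integrable_sum integrable_mult_right integrable_real_indicator)
      (auto simp: less_top[symmetric])
  have "(\<integral>\<omega>. first_last f r v \<omega> \<partial>M) \<le> (\<integral>\<omega>. (\<Sum>i=1..r. ?a i * indicator (first_exceed v i) \<omega>)
      + f 1 1 * real r powr (\<gamma>1 + \<gamma>2) * (\<Sum>i=1..r. \<Sum>d=l..r. indicator (joint_exceed v i d) \<omega>) \<partial>M)"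
    by (intro integral_mono[OF first_last_integrable _ first_last_upper]
        Bochner_Integration.integrable_add[OF int_F] integrable_mult_right Bochner_Integration.integrable_sum int_J)
  also have "\<dots> = (\<integral>\<omega>. (\<Sum>i=1..r. ?a i * indicator (first_exceed v i) \<omega>) \<partial>M)
      + f 1 1 * real r powr (\<gamma>1 + \<gamma>2) * (\<integral>\<omega>. (\<Sum>i=1..r. \<Sum>d=l..r. indicator (joint_exceed v i d) \<omega>) \<partial>M)"
    using int_F int_J
    by (subst Bochner_Integration.integral_add)
      (auto intro!: Bochner_Integration.integrable_sum integrable_mult_right)
  also have "(\<integral>\<omega>. (\<Sum>i=1..r. ?a i * indicator (first_exceed v i) \<omega>) \<partial>M)
      = (\<Sum>i=1..r. ?a i * measure M (first_exceed v i))"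
    by (rule PM.integral_sum_indicator) simp
  also have "(\<integral>\<omega>. (\<Sum>i=1..r. \<Sum>d=l..r. indicator (joint_exceed v i d) \<omega>) \<partial>M)
      = (\<Sum>i=1..r. \<Sum>d=l..r. measure M (joint_exceed v i d))"
    using int_J by (simp add: Bochner_Integration.integral_sum Bochner_Integration.integrable_sum)
  also have "(\<Sum>i=1..r. \<Sum>d=l..r. measure M (joint_exceed v i d)) = (\<Sum>i=1..r. ?Q)"
    by (intro sum.cong refl measure_joint_exceed_shift)
  also have "(\<Sum>i=1..r. ?Q) = real r * ?Q"
    by simp
  also have "f 1 1 * real r powr (\<gamma>1 + \<gamma>2) * (real r * ?Q) = f 1 1 * real r powr (\<gamma>1 + \<gamma>2 + 1) * ?Q"
    by (cases "r = 0") (simp_all add: powr_add)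
  also have "(\<Sum>i=1..r. ?a i * measure M (first_exceed v i))
      \<le> (\<Sum>i=1..r. ?a i) * measure M (window l v) + (\<Sum>i=1..l. ?a i) * measure M (exceed v)"
    using a by (rule sum_measure_first_exceed_le)
  finally show ?thesis
    by (simp add: sum_distrib_left mult.assoc)
qed

lemma normalised_first_last_bounds:
  fixes r l :: nat and v :: real
  assumes r: "r > 0" and D: "measure M (exceed v) > 0"
  defines "E \<equiv> (\<integral>\<omega>. first_last f r v \<omega> \<partial>M) / (real r powr (\<gamma>1 + \<gamma>2 + 1) * measure M (exceed v))"
    and "p \<equiv> measure M (window l v) / measure M (exceed v)"
    and "\<sigma> \<equiv> (\<Sum>d=l..r. measure M (joint_exceed v 0 d)) / measure M (exceed v)"
  shows "f 1 1 * p / (\<gamma>1 + \<gamma>2 + 1) - f 1 1 * \<sigma> \<le> E"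
    and "E \<le> f 1 1 * p * (real (r + l + 1) powr (\<gamma>1 + \<gamma>2 + 1) / real r powr (\<gamma>1 + \<gamma>2 + 1)) / (\<gamma>1 + \<gamma>2 + 1)
             + f 1 1 * (\<Sum>i=1..l. real (i + l) powr (\<gamma>1 + \<gamma>2)) / real r powr (\<gamma>1 + \<gamma>2 + 1) + f 1 1 * \<sigma>"
proof -
  define g R D where "g = \<gamma>1 + \<gamma>2" and "R = real r powr (g + 1)" and "D = measure M (exceed v)"
  have g: "g \<ge> 0"
    using \<gamma> by (simp add: g_def)
  have pos: "R > 0" "D > 0" "g + 1 > 0" "p \<ge> 0"
    using r D \<gamma> by (simp_all add: R_def D_def g_def p_def)
  have lower_sum: "1 / (g + 1) \<le> (\<Sum>i=1..r. real i powr g) / R"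
    using sum_powr_lower_bound[OF g, of r] pos by (simp add: g_def R_def field_simps)
  have upper_sum: "(\<Sum>i=1..r. real (i + l) powr g) / R \<le> real (r + l + 1) powr (g + 1) / (g + 1) / R"
    using sum_shifted_powr_upper_bound[OF g, where n=r and l=l] pos by (intro divide_right_mono) simp_all
  have "f 1 1 * p / (g + 1) = f 1 1 * (1 / (g + 1)) * p"
    by simp
  also have "\<dots> \<le> f 1 1 * ((\<Sum>i=1..r. real i powr g) / R) * p"
    using lower_sum pos f11 by (intro mult_right_mono mult_left_mono) auto
  finally have "f 1 1 * p / (g + 1) - f 1 1 * \<sigma> \<le> f 1 1 * ((\<Sum>i=1..r. real i powr g) / R) * p - f 1 1 * \<sigma>"
    by simp
  also have "\<dots> = (f 1 1 * (\<Sum>i=1..r. real i powr g) * measure M (window l v)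
      - f 1 1 * R * (\<Sum>d=l..r. measure M (joint_exceed v 0 d))) / (R * D)"
    using pos by (simp add: p_def \<sigma>_def D_def field_simps)
  also have "\<dots> \<le> E"
    using integral_first_last_lower[where r=r and l=l and v=v] pos
    by (simp add: E_def R_def D_def g_def divide_right_mono ac_simps)
  finally show "f 1 1 * p / (\<gamma>1 + \<gamma>2 + 1) - f 1 1 * \<sigma> \<le> E"
    by (simp add: g_def)
  have "E \<le> (f 1 1 * (\<Sum>i=1..r. real (i + l) powr g) * measure M (window l v)
      + f 1 1 * (\<Sum>i=1..l. real (i + l) powr g) * D
      + f 1 1 * R * (\<Sum>d=l..r. measure M (joint_exceed v 0 d))) / (R * D)"
    using integral_first_last_upper[where r=r and l=l and v=v] pos
    by (simp add: E_def R_def D_def g_def divide_right_mono ac_simps)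
  also have "\<dots> = f 1 1 * ((\<Sum>i=1..r. real (i + l) powr g) / R) * p
      + f 1 1 * (\<Sum>i=1..l. real (i + l) powr g) / R + f 1 1 * \<sigma>"
    using pos by (simp add: p_def \<sigma>_def D_def field_simps)
  also have "\<dots> \<le> f 1 1 * (real (r + l + 1) powr (g + 1) / (g + 1) / R) * p
      + f 1 1 * (\<Sum>i=1..l. real (i + l) powr g) / R + f 1 1 * \<sigma>"
    using upper_sum pos f11 by (intro add_mono order_refl mult_right_mono mult_left_mono) auto
  finally show "E \<le> f 1 1 * p * (real (r + l + 1) powr (\<gamma>1 + \<gamma>2 + 1) / real r powr (\<gamma>1 + \<gamma>2 + 1)) / (\<gamma>1 + \<gamma>2 + 1)
      + f 1 1 * (\<Sum>i=1..l. real (i + l) powr (\<gamma>1 + \<gamma>2)) / real r powr (\<gamma>1 + \<gamma>2 + 1) + f 1 1 * \<sigma>"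
    by (simp add: g_def R_def ac_simps)
qed

lemma normalised_first_last_close:
  fixes r l :: nat and v d :: real
  assumes r: "r > 0" and D: "measure M (exceed v) > 0" and d: "0 < d" "d \<le> 1/2"
    and window: "\<bar>measure M (window l v) / measure M (exceed v) - theta_window l\<bar> < d"
    and theta: "theta_window l < theta MY Y N + d"
    and pairs: "(\<Sum>k=l..r. measure M (joint_exceed v 0 k)) / measure M (exceed v) < d"
    and A: "real (r + l + 1) powr (\<gamma>1 + \<gamma>2 + 1) / real r powr (\<gamma>1 + \<gamma>2 + 1) < 1 + d"
    and B: "f 1 1 * (\<Sum>i=1..l. real (i + l) powr (\<gamma>1 + \<gamma>2)) / real r powr (\<gamma>1 + \<gamma>2 + 1) < d"
  shows "\<bar>(\<integral>\<omega>. first_last f r v \<omega> \<partial>M) / (real r powr (\<gamma>1 + \<gamma>2 + 1) * measure M (exceed v))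
           - f 1 1 / (\<gamma>1 + \<gamma>2 + 1) * theta MY Y N\<bar> \<le> (6 * f 1 1 + 1) * d"
proof (rule sandwich_error_bound[OF f11 _ _ _ d _ _ _ _ _ _ _ normalised_first_last_bounds[OF r D]])
  show "0 \<le> \<gamma>1 + \<gamma>2" "0 \<le> theta MY Y N" "theta MY Y N \<le> 1"
    using \<gamma> by (simp_all add: theta_def)
  show "0 \<le> measure M (window l v) / measure M (exceed v)"
    "theta MY Y N - d \<le> measure M (window l v) / measure M (exceed v)"
    "measure M (window l v) / measure M (exceed v) \<le> theta MY Y N + 2 * d"
    using window theta theta_le_theta_window[of l] by auto
  show "0 \<le> (\<Sum>k=l..r. measure M (joint_exceed v 0 k)) / measure M (exceed v)"
    using D by (auto intro!: divide_nonneg_pos sum_nonneg)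
qed (use pairs A B in auto)

lemma first_last_tendsto:
  fixes u :: "nat \<Rightarrow> real" and r :: "nat \<Rightarrow> nat"
  assumes S0: "cond_S 0 M X N r u"
    and u: "filterlim u at_top sequentially" and r: "filterlim r at_top sequentially"
  shows "(\<lambda>n. (\<integral>\<omega>. first_last f (r n) (u n) \<omega> \<partial>M) / (real (r n) powr (\<gamma>1 + \<gamma>2 + 1) * measure M (exceed (u n))))
         \<longlonglongrightarrow> f 1 1 / (\<gamma>1 + \<gamma>2 + 1) * theta MY Y N"
proof (rule tendstoI)
  fix e :: real assume e: "e > 0"
  define c where "c = f 1 1"
  have c: "c \<ge> 0"
    using f11 by (simp add: c_def)
  define d where "d = min (1/2) (e / (2 * (6 * c + 1)))"
  have "0 < d"
    using e c by (simp add: d_def)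
  moreover have "d \<le> 1/2"
    unfolding d_def by (rule min.cobounded1)
  ultimately have d: "0 < d" "d \<le> 1/2" .
  have "(6 * c + 1) * d \<le> (6 * c + 1) * (e / (2 * (6 * c + 1)))"
    using c by (intro mult_left_mono) (auto simp: d_def)
  also have "\<dots> = e / 2"
    using c by (simp add: field_simps)
  finally have de: "(6 * c + 1) * d < e"
    using e by linarith
  obtain l where l: "l \<ge> 1" "theta_window l < theta MY Y N + d" and pairs: "\<forall>\<^sub>F n in sequentially.
      (\<Sum>k=l..r n. measure M (joint_exceed (u n) 0 k)) / measure M (exceed (u n)) < d"
    using window_length_exists[OF S0 d(1)] by blast
  have "\<forall>\<^sub>F n in sequentially. \<bar>measure M (window l (u n)) / measure M (exceed (u n)) - theta_window l\<bar> < d"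
    using filterlim_compose[OF window_ratio_tendsto[OF l(1)] u] d by (auto dest: tendstoD simp: dist_real_def)
  moreover have "\<forall>\<^sub>F n in sequentially. measure M (exceed (u n)) > 0"
    using filterlim_iff[THEN iffD1, OF u, rule_format, OF exceed_pos] by (simp add: exceed_def)
  moreover have "\<forall>\<^sub>F n in sequentially. r n > 0"
    using filterlim_iff[THEN iffD1, OF r, rule_format, OF eventually_gt_at_top[of 0]] .
  moreover have "\<forall>\<^sub>F n in sequentially.
      real (r n + l + 1) powr (\<gamma>1 + \<gamma>2 + 1) / real (r n) powr (\<gamma>1 + \<gamma>2 + 1) < 1 + d"
    using order_tendstoD(2)[OF powr_shift_ratio_tendsto[OF r, of "l + 1"]] d by (simp add: add.assoc)
  moreover have "\<forall>\<^sub>F n in sequentially.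
      f 1 1 * (\<Sum>i=1..l. real (i + l) powr (\<gamma>1 + \<gamma>2)) / real (r n) powr (\<gamma>1 + \<gamma>2 + 1) < d"
    using order_tendstoD(2)[OF const_div_powr_tendsto_0[OF r]] d \<gamma> by simp
  ultimately show "\<forall>\<^sub>F n in sequentially. dist ((\<integral>\<omega>. first_last f (r n) (u n) \<omega> \<partial>M) /
      (real (r n) powr (\<gamma>1 + \<gamma>2 + 1) * measure M (exceed (u n)))) (f 1 1 / (\<gamma>1 + \<gamma>2 + 1) * theta MY Y N) < e"
    using pairs
  proof eventually_elim
    case (elim n)
    then show ?case
      using normalised_first_last_close[OF elim(3,2) d elim(1) l(2) elim(6,4,5)] de
      by (simp add: dist_real_def c_def)
  qed
qed

end

end

theorem lemma3p4:
  fixes M :: "'w measure" and X :: "int \<Rightarrow> 'w \<Rightarrow> real ^ 'd"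
    and MY :: "'v measure" and Y :: "int \<Rightarrow> 'v \<Rightarrow> real ^ 'd"
    and N :: "real ^ 'd \<Rightarrow> real"
    and u :: "nat \<Rightarrow> real" and r :: "nat \<Rightarrow> nat"
    and \<gamma>1 \<gamma>2 :: real and f :: "real \<Rightarrow> real \<Rightarrow> real"
  assumes norm: "is_norm N"
    and probM: "prob_space M" and probMY: "prob_space MY"
    and measX: "\<And>k. X k \<in> borel_measurable M"
    and measY: "\<And>k. Y k \<in> borel_measurable MY"
    and stat: "strictly_stationary M X"
    and rv: "rv_marginal M X N"
    and tail: "tail_process M X N MY Y"
    and u_pos: "\<And>n. u n > 0" and r_pos: "\<And>n. r n > 0"
    and u_lim: "filterlim u at_top sequentially"
    and r_lim: "filterlim r at_top sequentially"
    and nw_lim: "filterlim (\<lambda>n. real n * wn M X N u n) at_top sequentially"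
    and rn_lim: "(\<lambda>n. real (r n) / real n) \<longlonglongrightarrow> 0"
    and rw_lim: "(\<lambda>n. real (r n) * wn M X N u n) \<longlonglongrightarrow> 0"
    and S0: "cond_S 0 M X N r u"
    and g1: "\<gamma>1 \<ge> 0" and g2: "\<gamma>2 \<ge> 0"
    and f_nonneg: "\<And>s t. s \<ge> 0 \<Longrightarrow> t \<ge> 0 \<Longrightarrow> f s t \<ge> 0"
    and f_hom: "\<And>a b s t. a > 0 \<Longrightarrow> b > 0 \<Longrightarrow> s > 0 \<Longrightarrow> t > 0 \<Longrightarrow>
                  f (a * s) (b * t) = a powr \<gamma>1 * b powr \<gamma>2 * f s t"
  shows "(\<lambda>n. (\<integral>\<omega>. f (real (t_first X N (r n) (u n) \<omega>)) (real (t_last X N (r n) (u n) \<omega>))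
                     * indicator (A1 M X N (r n) (u n)) \<omega> \<partial>M)
              / (real (r n) powr (\<gamma>1 + \<gamma>2 + 1) * wn M X N u n))
         \<longlonglongrightarrow> f 1 1 / (\<gamma>1 + \<gamma>2 + 1) * theta MY Y N"
proof -
  from rv obtain \<alpha> where "\<alpha> > 0"
    and exceed_pos: "\<forall>\<^sub>F x in at_top. measure M {\<omega>\<in>space M. N (X 0 \<omega>) > x} > 0"
    and tail_ratio: "\<forall>t>0. ((\<lambda>x. measure M {\<omega>\<in>space M. N (X 0 \<omega>) > t * x} /
                   measure M {\<omega>\<in>space M. N (X 0 \<omega>) > x}) \<longlongrightarrow> t powr (-\<alpha>)) at_top"
    unfolding rv_marginal_def by (elim exE conjE) (rule that; assumption)
  interpret regvar_tail M X MY Y N \<alpha>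
  proof (rule regvar_tail.intro)
    show "\<And>t. t > 0 \<Longrightarrow> ((\<lambda>x. measure M {\<omega>\<in>space M. N (X 0 \<omega>) > t * x} /
        measure M {\<omega>\<in>space M. N (X 0 \<omega>) > x}) \<longlongrightarrow> t powr (-\<alpha>)) at_top"
      using tail_ratio by blast
  qed (fact norm probM probMY measX measY \<open>\<alpha> > 0\<close> exceed_pos tail stat)+
  have "(\<lambda>n. (\<integral>\<omega>. first_last f (r n) (u n) \<omega> \<partial>M) / (real (r n) powr (\<gamma>1 + \<gamma>2 + 1) * measure M (exceed (u n))))
      \<longlonglongrightarrow> f 1 1 / (\<gamma>1 + \<gamma>2 + 1) * theta MY Y N"
    by (rule first_last_tendsto) (use f_hom g1 g2 f_nonneg S0 u_lim r_lim in auto)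
  then show ?thesis
    unfolding first_last_def wn_def exceed_def .
qed

end
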